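(* Let $d\ge 2$ and $N\ge 2$. Let $A'_1,\dots,A'_N,A_1,\dots,A_N,\tilde A,B$ be quantum systems, each with Hilbert space $\mathbb{C}^d$, and let $\psi^+_{XY}$ denote the maximally entangled state $|\psi^+\rangle\langle\psi^+|$, $|\psi^+\rangle=\frac1{\sqrt d}\sum_{i=0}^{d-1}|ii\rangle$, on two such systems. Let $\rho_{\tilde AB}$ be an arbitrary state on $\tilde AB$, let $\{M^{(i)}\}_{i=1}^K$ (any $K\ge1$) be a POVM on $A_1\cdots A_N\tilde A$, and for each $i$ and $j\in\{1,\dots,N\}$ let $U^{(i,j)}_B$ be a unitary on $B$. Set $\Omega=\bigotimes_{l=1}^N\psi^+_{A'_lA_l}\otimes\rho_{\tilde AB}$ and $$P_{\mathrm{succ}}=\frac1N\sum_{j=1}^{N}\sum_{i=1}^{K}\operatorname{tr}\Big[\psi^+_{A'_jB}\,U^{(i,j)}_B\,\operatorname{tr}_{\text{all but }A'_jB}\big[(M^{(i)}\otimes\mathbf 1)\,\Omega\big]\,U^{(i,j)\dagger}_B\Big].$$ Then $$P_{\mathrm{succ}}\le\frac{N+d-1}{dN}.$$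
   Context: This models the symmetric constrained-entanglement quantum random access code with $N$ inputs: Alice holds $N$ $d$-dimensional inputs (purified by $A'_l$), shares only a $d\times d$ state with Bob, sends the (unrestricted) classical outcome $i$, and Bob, given his uniformly random choice $j$, applies a unitary to recover input $j$; $P_{\mathrm{succ}}$ is the average entanglement fidelity of $B$ with $A'_j$. *)

theory Defs
  imports Complex_Main "HOL-Library.FuncSet" "HOL-Library.Complex_Order"
begin

text \<open>Quantum systems are labelled by
natural numbers; each has Hilbert space C^d with computational basis 0..d-1.
A basis vector of the composite system on a finite label set S is a configuration
in PiE S (lambda _. {..<d}).\<close>

type_synonym cfg = "nat \<Rightarrow> nat"
type_synonym qop = "cfg \<Rightarrow> cfg \<Rightarrow> complex"

definition basis :: "nat \<Rightarrow> nat set \<Rightarrow> cfg set" where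
  "basis d S = PiE S (\<lambda>_. {..<d})"

definition mmul :: "nat \<Rightarrow> nat set \<Rightarrow> qop \<Rightarrow> qop \<Rightarrow> qop" where
  "mmul d S X Y = (\<lambda>x y. \<Sum>z\<in>basis d S. X x z * Y z y)"

definition adj :: "qop \<Rightarrow> qop" where
  "adj X = (\<lambda>x y. cnj (X y x))"

definition trace :: "nat \<Rightarrow> nat set \<Rightarrow> qop \<Rightarrow> complex" where
  "trace d S X = (\<Sum>x\<in>basis d S. X x x)"

definition idop :: "nat set \<Rightarrow> qop" where
  "idop S = (\<lambda>x y. if (\<forall>k\<in>S. x k = y k) then 1 else 0)"

definition op_ext :: "nat set \<Rightarrow> qop \<Rightarrow> nat set \<Rightarrow> qop" where
  "op_ext S X U = (\<lambda>x y. X (restrict x S) (restrict y S) *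
                      (if (\<forall>k\<in>U - S. x k = y k) then 1 else 0))"

definition ptrace :: "nat \<Rightarrow> nat set \<Rightarrow> nat set \<Rightarrow> qop \<Rightarrow> qop" where
  "ptrace d U S X = (\<lambda>x y. \<Sum>z\<in>basis d (U - S).
      X (\<lambda>k. if k \<in> S then x k else z k) (\<lambda>k. if k \<in> S then y k else z k))"

text \<open>Positive semidefinite operator on S (complex order: value is real and nonnegative).\<close>
definition psd :: "nat \<Rightarrow> nat set \<Rightarrow> qop \<Rightarrow> bool" where
  "psd d S X \<longleftrightarrow> (\<forall>v :: cfg \<Rightarrow> complex.
      0 \<le> (\<Sum>x\<in>basis d S. \<Sum>y\<in>basis d S. cnj (v x) * X x y * v y))"

definition density :: "nat \<Rightarrow> nat set \<Rightarrow> qop \<Rightarrow> bool" where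
  "density d S X \<longleftrightarrow> psd d S X \<and> trace d S X = 1"

definition unitary_op :: "nat \<Rightarrow> nat set \<Rightarrow> qop \<Rightarrow> bool" where
  "unitary_op d S V \<longleftrightarrow>
     (\<forall>x\<in>basis d S. \<forall>y\<in>basis d S. mmul d S V (adj V) x y = idop S x y) \<and>
     (\<forall>x\<in>basis d S. \<forall>y\<in>basis d S. mmul d S (adj V) V x y = idop S x y)"

definition povm :: "nat \<Rightarrow> nat set \<Rightarrow> nat \<Rightarrow> (nat \<Rightarrow> qop) \<Rightarrow> bool" where
  "povm d S K M \<longleftrightarrow> (\<forall>i\<in>{1..K}. psd d S (M i)) \<and>
     (\<forall>x\<in>basis d S. \<forall>y\<in>basis d S. (\<Sum>i=1..K. M i x y) = idop S x y)"

text \<open>Maximally entangled state psi+ on systems p, q: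
  |psi+> = 1/sqrt d * sum_i |ii>, so <x|psi+><psi+|y> = [x_p = x_q][y_p = y_q] / d.\<close>
definition psi_plus :: "nat \<Rightarrow> nat \<Rightarrow> nat \<Rightarrow> qop" where
  "psi_plus d p q = (\<lambda>x y. if x p = x q \<and> y p = y q then 1 / of_nat d else 0)"

definition sysA' :: "nat \<Rightarrow> nat \<Rightarrow> nat" where "sysA' N l = l"
definition sysA :: "nat \<Rightarrow> nat \<Rightarrow> nat" where "sysA N l = N + l"
definition sysAt :: "nat \<Rightarrow> nat" where "sysAt N = 2 * N + 1"
definition sysB :: "nat \<Rightarrow> nat" where "sysB N = 2 * N + 2"

definition all_sys :: "nat \<Rightarrow> nat set" where
  "all_sys N = sysA' N ` {1..N} \<union> sysA N ` {1..N} \<union> {sysAt N, sysB N}"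

definition alice_sys :: "nat \<Rightarrow> nat set" where
  "alice_sys N = sysA N ` {1..N} \<union> {sysAt N}"

definition AtB_sys :: "nat \<Rightarrow> nat set" where
  "AtB_sys N = {sysAt N, sysB N}"

definition Omega :: "nat \<Rightarrow> nat \<Rightarrow> qop \<Rightarrow> qop" where
  "Omega d N rho = (\<lambda>x y. (\<Prod>l\<in>{1..N}. psi_plus d (sysA' N l) (sysA N l) x y) *
      rho (restrict x (AtB_sys N)) (restrict y (AtB_sys N)))"

definition opB :: "nat \<Rightarrow> (nat \<Rightarrow> nat \<Rightarrow> complex) \<Rightarrow> qop" where
  "opB N U = (\<lambda>x y. U (x (sysB N)) (y (sysB N)))"

definition P_succ :: "nat \<Rightarrow> nat \<Rightarrow> qop \<Rightarrow> nat \<Rightarrow> (nat \<Rightarrow> qop)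
    \<Rightarrow> (nat \<Rightarrow> nat \<Rightarrow> nat \<Rightarrow> nat \<Rightarrow> complex) \<Rightarrow> complex" where
  "P_succ d N rho K M U =
     (1 / of_nat N) * (\<Sum>j\<in>{1..N}. \<Sum>i\<in>{1..K}.
       (let S = {sysA' N j, sysB N};
            sigma = ptrace d (all_sys N) S
                      (mmul d (all_sys N) (op_ext (alice_sys N) (M i) (all_sys N)) (Omega d N rho));
            V = op_ext {sysB N} (opB N (U i j)) S
        in trace d S (mmul d S (psi_plus d (sysA' N j) (sysB N))
                        (mmul d S (mmul d S V sigma) (adj V)))))"

end

theory Submission
  imports Defs
begin

text \<open>Write \<open>M\<^sup>(\<^sup>i\<^sup>) = \<Sum>\<^sub>k |w\<^sub>i\<^sub>k\<rangle>\<langle>w\<^sub>i\<^sub>k|\<close> and \<open>\<rho> = \<Sum>\<^sub>m |u\<^sub>m\<rangle>\<langle>u\<^sub>m|\<close> as sums of rank-one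
  operators. Because \<open>\<Omega>\<close> couples each \<open>A'\<^sub>l\<close> to \<open>A\<^sub>l\<close> only through \<open>\<psi>\<^sup>+\<close>, the term of outcome \<open>i\<close>
  and question \<open>j\<close> equals \<open>\<Sum>\<^sub>k\<^sub>,\<^sub>m \<parallel>Y\<^sub>j z\<^sub>i\<^sub>k\<^sub>m\<parallel>\<^sup>2 / d\<^sup>N\<^sup>+\<^sup>3\<close>, where \<open>z\<^sub>i\<^sub>k\<^sub>m\<close> is \<open>u\<^sub>m\<close> contracted
  with \<open>w\<^sub>i\<^sub>k\<close> over \<open>\<tilde>A\<close> and \<open>Y\<^sub>j\<close> contracts \<open>A\<^sub>j B\<close> with the maximally entangled vector
  rotated by \<open>U\<^sup>(\<^sup>i\<^sup>,\<^sup>j\<^sup>)\<close>. Then \<open>\<parallel>Y\<^sub>j z\<parallel> = d \<parallel>P\<^sub>j z\<parallel>\<close> for orthogonal projections \<open>P\<^sub>j\<close>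
  whose pairwise overlaps are at most \<open>1/d\<close>, and expanding \<open>0 \<le> \<parallel>d \<Sum>\<^sub>j P\<^sub>j z - \<lambda> z\<parallel>\<^sup>2\<close>
  with \<open>\<lambda> = N + d - 1\<close> gives \<open>\<Sum>\<^sub>j \<parallel>Y\<^sub>j z\<parallel>\<^sup>2 \<le> d (N + d - 1) \<parallel>z\<parallel>\<^sup>2\<close>. Completeness of the
  POVM and \<open>tr \<rho> = 1\<close> give \<open>\<Sum>\<^sub>i\<^sub>,\<^sub>k\<^sub>,\<^sub>m \<parallel>z\<^sub>i\<^sub>k\<^sub>m\<parallel>\<^sup>2 = d\<^sup>N\<^sup>+\<^sup>1\<close>, and the bound follows.\<close>

section \<open>Sums over basis configurations\<close>

definition merge :: "nat set \<Rightarrow> cfg \<Rightarrow> cfg \<Rightarrow> cfg" where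
  "merge S x y = (\<lambda>k. if k \<in> S then x k else y k)"

lemma finite_basis [simp]: "finite S \<Longrightarrow> finite (basis d S)"
  unfolding basis_def by (intro finite_PiE) auto

lemma card_basis: "finite S \<Longrightarrow> card (basis d S) = d ^ card S"
  unfolding basis_def by (simp add: card_PiE)

lemma basis_empty: "basis d {} = {\<lambda>_. undefined}"
  unfolding basis_def by simp

lemma basis_lessD: "x \<in> basis d S \<Longrightarrow> k \<in> S \<Longrightarrow> x k < d"
  unfolding basis_def by (auto simp: PiE_def Pi_def)

lemma basis_undefined: "x \<in> basis d S \<Longrightarrow> k \<notin> S \<Longrightarrow> x k = undefined"
  unfolding basis_def by (auto simp: PiE_def extensional_def)

lemma basis_memI:
  "(\<And>k. k \<in> S \<Longrightarrow> x k < d) \<Longrightarrow> (\<And>k. k \<notin> S \<Longrightarrow> x k = undefined) \<Longrightarrow> x \<in> basis d S"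
  unfolding basis_def by (auto simp: PiE_def extensional_def Pi_def)

lemma restrict_in_basis: "x \<in> basis d U \<Longrightarrow> S \<subseteq> U \<Longrightarrow> restrict x S \<in> basis d S"
  unfolding basis_def by (auto simp: PiE_def Pi_def)

lemma fun_upd_in_basis: "a \<in> basis d S \<Longrightarrow> k \<in> S \<Longrightarrow> \<beta> < d \<Longrightarrow> a(k:=\<beta>) \<in> basis d S"
  unfolding basis_def by (auto simp: PiE_def extensional_def Pi_def)

lemma merge_in_basis: "a \<in> basis d S \<Longrightarrow> c \<in> basis d T \<Longrightarrow> merge S a c \<in> basis d (S \<union> T)"
  unfolding basis_def merge_def by (auto simp: PiE_def extensional_def Pi_def)

lemma sum_basis_Un:
  assumes "S \<inter> T = {}"
  shows "(\<Sum>x\<in>basis d (S \<union> T). F x) = (\<Sum>a\<in>basis d S. \<Sum>c\<in>basis d T. F (merge S a c))"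
proof -
  have "(\<Sum>a\<in>basis d S. \<Sum>c\<in>basis d T. F (merge S a c))
      = (\<Sum>(a,c)\<in>basis d S \<times> basis d T. F (merge S a c))"
    by (rule sum.cartesian_product)
  also have "\<dots> = (\<Sum>x\<in>basis d (S \<union> T). F x)"
  proof (rule sum.reindex_bij_witness[where i="\<lambda>x. (restrict x S, restrict x T)"
        and j="\<lambda>(a,c). merge S a c"])
    fix ac assume "ac \<in> basis d S \<times> basis d T"
    then obtain a c where ac: "ac = (a,c)" "a \<in> basis d S" "c \<in> basis d T" by auto
    show "(restrict ((\<lambda>(a,c). merge S a c) ac) S, restrict ((\<lambda>(a,c). merge S a c) ac) T) = ac"
      using ac assms unfolding basis_def merge_def
      by (auto simp: fun_eq_iff PiE_def extensional_def restrict_def)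
    show "(\<lambda>(a,c). merge S a c) ac \<in> basis d (S \<union> T)" using ac merge_in_basis by auto
    show "F ((\<lambda>(a,c). merge S a c) ac) = (case ac of (a, c) \<Rightarrow> F (merge S a c))" using ac by simp
  next
    fix x assume x: "x \<in> basis d (S \<union> T)"
    show "(\<lambda>(a,c). merge S a c) (restrict x S, restrict x T) = x"
      using x unfolding basis_def merge_def
      by (auto simp: fun_eq_iff PiE_def extensional_def restrict_def)
    show "(restrict x S, restrict x T) \<in> basis d S \<times> basis d T"
      using x unfolding basis_def by (auto simp: PiE_def Pi_def)
  qed
  finally show ?thesis by simp
qed

lemma sum_basis_insert:
  assumes "k \<notin> S"
  shows "(\<Sum>x\<in>basis d (insert k S). F x) = (\<Sum>\<beta><d. \<Sum>c\<in>basis d S. F (c(k:=\<beta>)))"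
proof -
  have "basis d (insert k S) = (\<lambda>(y, g). g(k := y)) ` ({..<d} \<times> basis d S)"
    unfolding basis_def by (rule PiE_insert_eq)
  moreover have "inj_on (\<lambda>(y, g). g(k := y)) ({..<d} \<times> basis d S)"
    unfolding basis_def using inj_combinator[OF assms, of "\<lambda>_. {..<d}"] by simp
  ultimately have "(\<Sum>x\<in>basis d (insert k S). F x) = (\<Sum>(y,g)\<in>{..<d} \<times> basis d S. F (g(k:=y)))"
    by (simp add: sum.reindex case_prod_unfold)
  also have "\<dots> = (\<Sum>\<beta><d. \<Sum>c\<in>basis d S. F (c(k:=\<beta>)))"
    by (rule sum.cartesian_product[symmetric])
  finally show ?thesis .
qed

lemma sum_basis_singleton: "(\<Sum>x\<in>basis d {k}. F x) = (\<Sum>s<d. F ((\<lambda>_. undefined)(k:=s)))"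
  using sum_basis_insert[where k=k and S="{}" and d=d and F=F] by (simp add: basis_empty fun_upd_def)

lemma sum_basis_doubleton:
  assumes "k1 \<noteq> k2"
  shows "(\<Sum>x\<in>basis d {k1,k2}. F x) = (\<Sum>s<d. \<Sum>e<d. F (((\<lambda>_. undefined)(k2:=e))(k1:=s)))"
  using sum_basis_insert[where k=k1 and S="{k2}" and d=d and F=F] assms
  by (simp add: sum_basis_singleton)

lemma sum_basis_doubleton_coords:
  assumes "j \<noteq> b"
  shows "(\<Sum>q\<in>basis d {j,b}. G (q j) (q b)) = (\<Sum>\<alpha><d. \<Sum>e<d. G \<alpha> e)"
  using sum_basis_doubleton[OF assms, where d=d and F="\<lambda>q. G (q j) (q b)"] assms by simp

lemma sum_basis_sum_fun_upd:
  assumes "k \<in> S"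
  shows "(\<Sum>a\<in>basis d S. \<Sum>\<beta><d. F (a(k:=\<beta>))) = of_nat d * (\<Sum>a\<in>basis d S. F a)"
proof -
  have S: "S = insert k (S - {k})" using assms by auto
  have "(\<Sum>a\<in>basis d S. \<Sum>\<beta><d. F (a(k:=\<beta>)))
      = (\<Sum>\<gamma><d. \<Sum>c\<in>basis d (S-{k}). \<Sum>\<beta><d. F ((c(k:=\<gamma>))(k:=\<beta>)))"
    by (subst S, subst sum_basis_insert) auto
  also have "\<dots> = of_nat d * (\<Sum>c\<in>basis d (S-{k}). \<Sum>\<beta><d. F (c(k:=\<beta>)))" by simp
  also have "(\<Sum>c\<in>basis d (S-{k}). \<Sum>\<beta><d. F (c(k:=\<beta>))) = (\<Sum>a\<in>basis d S. F a)"
    by (subst S, subst sum_basis_insert) (auto intro: sum.swap)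
  finally show ?thesis .
qed

lemma sum_basis_restrict_delta:
  assumes "finite T" "restrict h T \<in> basis d T"
  shows "(\<Sum>c\<in>basis d T. if (\<forall>k\<in>T. c k = h k) then F c else 0) = F (restrict h T)"
proof -
  have "\<And>c. c \<in> basis d T \<Longrightarrow> (\<forall>k\<in>T. c k = h k) \<longleftrightarrow> c = restrict h T"
    unfolding basis_def by (auto simp: fun_eq_iff PiE_def extensional_def)
  then have "(\<Sum>c\<in>basis d T. if (\<forall>k\<in>T. c k = h k) then F c else 0)
      = (\<Sum>c\<in>basis d T. if c = restrict h T then F c else 0)" by (intro sum.cong) auto
  also have "\<dots> = F (restrict h T)" using assms by simp
  finally show ?thesis .
qed

lemma prod_if_const:
  fixes c :: "'a::comm_semiring_1"
  assumes "finite L"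
  shows "(\<Prod>l\<in>L. if P l then c else 0) = (if \<forall>l\<in>L. P l then c ^ card L else 0)"
  using assms by (cases "\<forall>l\<in>L. P l") (auto intro!: prod_zero)

lemma sum_reverse4:
  "(\<Sum>x\<in>A. \<Sum>y\<in>A. \<Sum>q\<in>A. \<Sum>p\<in>A. f x y q p) = (\<Sum>p\<in>A. \<Sum>q\<in>A. \<Sum>y\<in>A. \<Sum>x\<in>A. f x y q p)"
proof -
  have "(\<Sum>x\<in>A. \<Sum>y\<in>A. \<Sum>q\<in>A. \<Sum>p\<in>A. f x y q p) = (\<Sum>x\<in>A. \<Sum>y\<in>A. \<Sum>p\<in>A. \<Sum>q\<in>A. f x y q p)"
    by (rule sum.cong[OF refl], rule sum.cong[OF refl], rule sum.swap)
  also have "\<dots> = (\<Sum>x\<in>A. \<Sum>p\<in>A. \<Sum>y\<in>A. \<Sum>q\<in>A. f x y q p)"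
    by (rule sum.cong[OF refl], rule sum.swap)
  also have "\<dots> = (\<Sum>p\<in>A. \<Sum>x\<in>A. \<Sum>y\<in>A. \<Sum>q\<in>A. f x y q p)"
    by (rule sum.swap)
  also have "\<dots> = (\<Sum>p\<in>A. \<Sum>x\<in>A. \<Sum>q\<in>A. \<Sum>y\<in>A. f x y q p)"
    by (rule sum.cong[OF refl], rule sum.cong[OF refl], rule sum.swap)
  also have "\<dots> = (\<Sum>p\<in>A. \<Sum>q\<in>A. \<Sum>x\<in>A. \<Sum>y\<in>A. f x y q p)"
    by (rule sum.cong[OF refl], rule sum.swap)
  also have "\<dots> = (\<Sum>p\<in>A. \<Sum>q\<in>A. \<Sum>y\<in>A. \<Sum>x\<in>A. f x y q p)"
    by (rule sum.cong[OF refl], rule sum.cong[OF refl], rule sum.swap)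
  finally show ?thesis .
qed

lemma sum_swap_innermost4:
  "(\<Sum>p\<in>A. \<Sum>q\<in>B. \<Sum>a\<in>C. \<Sum>s\<in>D. \<Sum>k\<in>K. f p q a s k) = (\<Sum>k\<in>K. \<Sum>p\<in>A. \<Sum>q\<in>B. \<Sum>a\<in>C. \<Sum>s\<in>D. f p q a s k)"
proof -
  have "(\<Sum>p\<in>A. \<Sum>q\<in>B. \<Sum>a\<in>C. \<Sum>s\<in>D. \<Sum>k\<in>K. f p q a s k) = (\<Sum>p\<in>A. \<Sum>q\<in>B. \<Sum>a\<in>C. \<Sum>k\<in>K. \<Sum>s\<in>D. f p q a s k)"
    by (rule sum.cong[OF refl], rule sum.cong[OF refl], rule sum.cong[OF refl], rule sum.swap)
  also have "\<dots> = (\<Sum>p\<in>A. \<Sum>q\<in>B. \<Sum>k\<in>K. \<Sum>a\<in>C. \<Sum>s\<in>D. f p q a s k)"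
    by (rule sum.cong[OF refl], rule sum.cong[OF refl], rule sum.swap)
  also have "\<dots> = (\<Sum>p\<in>A. \<Sum>k\<in>K. \<Sum>q\<in>B. \<Sum>a\<in>C. \<Sum>s\<in>D. f p q a s k)"
    by (rule sum.cong[OF refl], rule sum.swap)
  also have "\<dots> = (\<Sum>k\<in>K. \<Sum>p\<in>A. \<Sum>q\<in>B. \<Sum>a\<in>C. \<Sum>s\<in>D. f p q a s k)"
    by (rule sum.swap)
  finally show ?thesis .
qed

lemma sum_swap_innermost3:
  "(\<Sum>i\<in>I. \<Sum>k\<in>K i. \<Sum>m\<in>R. \<Sum>a\<in>A. f i k m a) = (\<Sum>a\<in>A. \<Sum>i\<in>I. \<Sum>k\<in>K i. \<Sum>m\<in>R. f i k m a)"
proof -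
  have "(\<Sum>i\<in>I. \<Sum>k\<in>K i. \<Sum>m\<in>R. \<Sum>a\<in>A. f i k m a) = (\<Sum>i\<in>I. \<Sum>k\<in>K i. \<Sum>a\<in>A. \<Sum>m\<in>R. f i k m a)"
    by (rule sum.cong[OF refl], rule sum.cong[OF refl], rule sum.swap)
  also have "\<dots> = (\<Sum>i\<in>I. \<Sum>a\<in>A. \<Sum>k\<in>K i. \<Sum>m\<in>R. f i k m a)"
    by (rule sum.cong[OF refl], rule sum.swap)
  also have "\<dots> = (\<Sum>a\<in>A. \<Sum>i\<in>I. \<Sum>k\<in>K i. \<Sum>m\<in>R. f i k m a)"
    by (rule sum.swap)
  finally show ?thesis .
qed

section \<open>Positive semidefinite matrices are sums of rank-one matrices\<close>

definition quad_form :: "'a set \<Rightarrow> ('a \<Rightarrow> 'a \<Rightarrow> complex) \<Rightarrow> ('a \<Rightarrow> complex) \<Rightarrow> complex" where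
  "quad_form I X v = (\<Sum>x\<in>I. \<Sum>y\<in>I. cnj (v x) * X x y * v y)"

definition rank_one_sum :: "'a set \<Rightarrow> ('a \<Rightarrow> 'a \<Rightarrow> complex) \<Rightarrow> nat \<Rightarrow> (nat \<Rightarrow> 'a \<Rightarrow> complex) \<Rightarrow> bool" where
  "rank_one_sum I X r u \<longleftrightarrow> (\<forall>x\<in>I. \<forall>y\<in>I. X x y = (\<Sum>k<r. u k x * cnj (u k y)))"

lemma psd_iff_quad_form: "psd d S X \<longleftrightarrow> (\<forall>v. 0 \<le> quad_form (basis d S) X v)"
  unfolding psd_def quad_form_def ..

lemma quad_form_insert:
  assumes "finite I" "p \<notin> I"
  shows "quad_form (insert p I) X w = cnj (w p) * X p p * w p + cnj (w p) * (\<Sum>y\<in>I. X p y * w y)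
     + (\<Sum>x\<in>I. cnj (w x) * X x p) * w p + quad_form I X w"
  using assms unfolding quad_form_def
  by (simp add: sum.insert sum.distrib sum_distrib_left sum_distrib_right algebra_simps)

lemma quad_form_cong: "(\<And>x. x \<in> I \<Longrightarrow> v x = w x) \<Longrightarrow> quad_form I X v = quad_form I X w"
  unfolding quad_form_def by (intro sum.cong) auto

lemma quad_form_unit:
  assumes "finite I" "x \<in> I"
  shows "quad_form I X (\<lambda>a. if a = x then 1 else 0) = X x x"
proof -
  have "(\<Sum>b\<in>I. cnj (if a = x then 1 else 0) * X a b * (if b = x then 1 else 0))
      = (if a = x then X a x else 0)" for a
    using assms by (simp add: if_distrib[of "\<lambda>t. _ * t"] cong: if_cong)
  then show ?thesis using assms unfolding quad_form_def by simp
qed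

lemma quad_form_two_point:
  assumes "finite I" "x \<in> I" "y \<in> I" "x \<noteq> y"
  shows "quad_form I X (\<lambda>a. if a = x then p else if a = y then q else 0) =
     cnj p * X x x * p + cnj p * X x y * q + cnj q * X y x * p + cnj q * X y y * q"
proof -
  have two: "sum f I = f x + f y" if "\<And>a. a \<in> I \<Longrightarrow> a \<noteq> x \<Longrightarrow> a \<noteq> y \<Longrightarrow> f a = 0" for f :: "'a \<Rightarrow> complex"
  proof -
    have "sum f I = sum f {x,y}" using assms that by (intro sum.mono_neutral_right) auto
    then show ?thesis using assms by simp
  qed
  let ?v = "\<lambda>a. if a = x then p else if a = y then q else 0"
  have "quad_form I X ?v = (\<Sum>a\<in>I. cnj (?v a) * X a x * p + cnj (?v a) * X a y * q)"
    unfolding quad_form_def using assms by (intro sum.cong refl, subst two) auto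
  also have "\<dots> = cnj p * X x x * p + cnj p * X x y * q + cnj q * X y x * p + cnj q * X y y * q"
    using assms by (subst two) auto
  finally show ?thesis .
qed

lemma psd_diagonal_nonneg:
  assumes "finite I" "\<forall>v. 0 \<le> quad_form I X v" "x \<in> I"
  shows "0 \<le> X x x"
  using assms(2) quad_form_unit[OF assms(1,3), of X] by metis

lemma psd_hermitian:
  assumes "finite I" "\<forall>v. 0 \<le> quad_form I X v" "x \<in> I" "y \<in> I"
  shows "X x y = cnj (X y x)"
proof (cases "x = y")
  case True
  then show ?thesis using psd_diagonal_nonneg[OF assms(1-3)]
    by (simp add: less_eq_complex_def complex_eq_iff)
next
  case False
  have "0 \<le> X x x" "0 \<le> X y y" using psd_diagonal_nonneg[OF assms(1,2)] assms(3,4) by auto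
  then have diag: "Im (X x x) = 0" "Im (X y y) = 0" by (auto simp: less_eq_complex_def)
  have "0 \<le> X x x + X x y + X y x + X y y"
    using assms(2)[rule_format, of "\<lambda>a. if a = x then 1 else if a = y then 1 else 0"]
      quad_form_two_point[OF assms(1,3,4) False, of X 1 1] by simp
  then have Im: "Im (X x x) + Im (X x y) + Im (X y x) + Im (X y y) = 0"
    by (simp add: less_eq_complex_def)
  have "0 \<le> X x x + X x y * \<i> - \<i> * X y x + X y y"
    using assms(2)[rule_format, of "\<lambda>a. if a = x then 1 else if a = y then \<i> else 0"]
      quad_form_two_point[OF assms(1,3,4) False, of X 1 \<i>] by (simp add: algebra_simps)
  then have Re: "Im (X x x) + Re (X x y) - Re (X y x) + Im (X y y) = 0"
    by (simp add: less_eq_complex_def)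
  show ?thesis using diag Im Re by (simp add: complex_eq_iff)
qed

text \<open>A vanishing diagonal entry forces its row to vanish: otherwise the two-point test vector
  \<open>-t X p y \<cdot> e\<^sub>p + e\<^sub>y\<close> has negative energy for large \<open>t\<close>.\<close>

lemma psd_zero_diagonal_row:
  assumes "finite I" "\<forall>v. 0 \<le> quad_form I X v" "p \<in> I" "y \<in> I" "X p p = 0"
  shows "X p y = 0"
proof (rule ccontr)
  assume ne: "X p y \<noteq> 0"
  then have py: "p \<noteq> y" using assms by auto
  define t :: real where "t = (Re (X y y) + 1) / (2 * (cmod (X p y))^2)"
  have "Re (X y y) \<ge> 0" using psd_diagonal_nonneg[OF assms(1,2,4)] by (simp add: less_eq_complex_def)
  then have tpos: "t > 0" using ne unfolding t_def by (intro divide_pos_pos) auto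
  let ?l = "- complex_of_real t * X p y"
  have h: "X y p = cnj (X p y)" using psd_hermitian[OF assms(1,2,4,3)] .
  have "0 \<le> quad_form I X (\<lambda>a. if a = p then ?l else if a = y then 1 else 0)" using assms(2) by blast
  also have "\<dots> = cnj ?l * X p y + X y p * ?l + X y y"
    using quad_form_two_point[OF assms(1,3,4) py, of X ?l 1] assms(5) by simp
  also have "\<dots> = - 2 * complex_of_real t * (cnj (X p y) * X p y) + X y y"
    using h by (simp add: algebra_simps)
  also have "\<dots> = complex_of_real (- 2 * t * (cmod (X p y))^2) + X y y"
    by (simp flip: complex_norm_square add: mult.commute)
  finally have "0 \<le> - 2 * t * (cmod (X p y))^2 + Re (X y y)" by (simp add: less_eq_complex_def)
  moreover have "2 * t * (cmod (X p y))^2 = Re (X y y) + 1" unfolding t_def using ne by simp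
  ultimately show False by simp
qed

lemma psd_remove:
  assumes "finite I" "p \<notin> I" "\<forall>v. 0 \<le> quad_form (insert p I) X v"
  shows "\<forall>v. 0 \<le> quad_form I X v"
proof
  fix v
  have "quad_form (insert p I) X (v(p:=0)) = quad_form I X (v(p:=0))"
    using quad_form_insert[OF assms(1,2)] by simp
  also have "\<dots> = quad_form I X v" using assms(2) by (intro quad_form_cong) auto
  finally show "0 \<le> quad_form I X v" using assms(3)[rule_format, of "v(p:=0)"] by simp
qed

text \<open>The energy of \<open>v\<close> under the Schur complement is the energy of \<open>v\<close> extended by the
  minimising value \<open>v p = - (\<Sum>y\<in>I. X p y * v y) / X p p\<close>.\<close>

lemma psd_schur_complement:
  assumes fin: "finite I" and pI: "p \<notin> I" and psd: "\<forall>v. 0 \<le> quad_form (insert p I) X v"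
    and Xpp: "X p p \<noteq> 0"
  shows "\<forall>v. 0 \<le> quad_form I (\<lambda>x y. X x y - X x p * X p y / X p p) v"
proof
  fix v
  have herm: "\<And>x. x \<in> I \<Longrightarrow> X x p = cnj (X p x)"
    using psd_hermitian[OF _ psd] fin by blast
  define s where "s = (\<Sum>y\<in>I. X p y * v y)"
  define \<mu> where "\<mu> = - s / X p p"
  have cs: "(\<Sum>x\<in>I. cnj (v x) * X x p) = cnj s"
    unfolding s_def cnj_sum by (intro sum.cong) (simp_all add: herm mult.commute)
  have "cnj (X p p) = X p p" using psd_hermitian[OF _ psd, of p p] fin by simp
  then have cm: "cnj \<mu> = - cnj s / X p p" unfolding \<mu>_def by simp
  have "quad_form (insert p I) X (v(p:=\<mu>))
      = cnj \<mu> * X p p * \<mu> + cnj \<mu> * s + cnj s * \<mu> + quad_form I X v"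
  proof -
    have "(\<Sum>y\<in>I. X p y * (v(p:=\<mu>)) y) = s" unfolding s_def using pI by (intro sum.cong) auto
    moreover have "(\<Sum>x\<in>I. cnj ((v(p:=\<mu>)) x) * X x p) = cnj s"
      unfolding cs[symmetric] using pI by (intro sum.cong) auto
    moreover have "quad_form I X (v(p:=\<mu>)) = quad_form I X v" using pI by (intro quad_form_cong) auto
    ultimately show ?thesis using quad_form_insert[OF fin pI, of X "v(p:=\<mu>)"] by simp
  qed
  also have "\<dots> = quad_form I X v - cnj s * s / X p p"
    unfolding cm unfolding \<mu>_def using Xpp by (simp add: field_simps)
  also have "cnj s * s = (\<Sum>x\<in>I. \<Sum>y\<in>I. cnj (v x) * X x p * (X p y * v y))"
    unfolding cs[symmetric] by (simp add: s_def sum_product mult.assoc)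
  also have "quad_form I X v - \<dots> / X p p = quad_form I (\<lambda>x y. X x y - X x p * X p y / X p p) v"
    unfolding quad_form_def
    by (simp add: sum_divide_distrib right_diff_distrib left_diff_distrib sum_subtractf mult_ac)
  finally have "quad_form (insert p I) X (v(p:=\<mu>)) = quad_form I (\<lambda>x y. X x y - X x p * X p y / X p p) v" .
  with psd show "0 \<le> quad_form I (\<lambda>x y. X x y - X x p * X p y / X p p) v" by metis
qed

lemma rank_one_sum_insert:
  assumes pI: "p \<notin> I" and ru: "rank_one_sum I (\<lambda>x y. X x y - v x * cnj (v y)) r u"
    and pivot: "\<And>x y. x \<in> insert p I \<Longrightarrow> y \<in> insert p I \<Longrightarrow> x = p \<or> y = p \<Longrightarrow> X x y = v x * cnj (v y)"
  shows "rank_one_sum (insert p I) X (Suc r) (\<lambda>k. if k < r then (u k)(p:=0) else v)"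
  unfolding rank_one_sum_def
proof (intro ballI)
  fix x y assume x: "x \<in> insert p I" and y: "y \<in> insert p I"
  have "X x y = (\<Sum>k<r. ((u k)(p:=0)) x * cnj (((u k)(p:=0)) y)) + v x * cnj (v y)"
  proof (cases "x = p \<or> y = p")
    case True
    then show ?thesis using pivot[OF x y] by auto
  next
    case False
    then have "x \<in> I" "y \<in> I" using x y by auto
    with ru have "X x y - v x * cnj (v y) = (\<Sum>k<r. u k x * cnj (u k y))"
      unfolding rank_one_sum_def by blast
    then show ?thesis using False by (simp add: diff_eq_eq)
  qed
  then show "X x y = (\<Sum>k<Suc r. (if k < r then (u k)(p:=0) else v) x
      * cnj ((if k < r then (u k)(p:=0) else v) y))" by simp
qed

text \<open>Induction on the index set: split off the pivot row and column through the vector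
  \<open>X \<cdot> p / \<surd>(X p p)\<close>, or through the zero vector when \<open>X p p = 0\<close>.\<close>

lemma psd_rank_one_sum:
  fixes X :: "'a \<Rightarrow> 'a \<Rightarrow> complex"
  assumes "finite I" "\<forall>v. 0 \<le> quad_form I X v"
  shows "\<exists>r u. rank_one_sum I X r u"
  using assms
proof (induction I arbitrary: X rule: finite_induct)
  case empty
  then show ?case by (auto simp: rank_one_sum_def)
next
  case (insert p I)
  note fin = insert.hyps(1) and pI = insert.hyps(2) and psd = insert.prems
  have herm: "\<And>x y. x \<in> insert p I \<Longrightarrow> y \<in> insert p I \<Longrightarrow> X x y = cnj (X y x)"
    by (rule psd_hermitian[OF _ psd]) (use fin in auto)
  show ?case
  proof (cases "X p p = 0")
    case True
    have row: "\<And>y. y \<in> insert p I \<Longrightarrow> X p y = 0"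
      using psd_zero_diagonal_row[OF _ psd _ _ True] fin by blast
    have col: "\<And>y. y \<in> insert p I \<Longrightarrow> X y p = 0"
      using row herm by (metis complex_cnj_zero insertI1)
    obtain r u where "rank_one_sum I X r u"
      using insert.IH[OF psd_remove[OF fin pI psd]] by blast
    then have "rank_one_sum (insert p I) X (Suc r) (\<lambda>k. if k < r then (u k)(p:=0) else (\<lambda>_. 0))"
      using row col by (intro rank_one_sum_insert[OF pI]) auto
    then show ?thesis by blast
  next
    case False
    define c where "c = Re (X p p)"
    have "0 \<le> X p p" using psd_diagonal_nonneg[OF _ psd] fin by blast
    then have c: "X p p = complex_of_real c" "c > 0"
      using False unfolding c_def by (auto simp: complex_eq_iff less_eq_complex_def)
    define v where "v x = X x p / complex_of_real (sqrt c)" for x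
    have sc: "complex_of_real (sqrt c) * complex_of_real (sqrt c) = X p p"
      using c by (simp flip: of_real_mult)
    have v: "v x * cnj (v y) = X x p * X p y / X p p" if "y \<in> insert p I" for x y
    proof -
      have "v x * cnj (v y) = X x p / complex_of_real (sqrt c) * (X p y / complex_of_real (sqrt c))"
        unfolding v_def using herm[OF that insertI1] by simp
      also have "\<dots> = X x p * X p y / X p p" unfolding sc[symmetric] by simp
      finally show ?thesis .
    qed
    obtain r u where "rank_one_sum I (\<lambda>x y. X x y - X x p * X p y / X p p) r u"
      using insert.IH[OF psd_schur_complement[OF fin pI psd False]] by blast
    then have "rank_one_sum (insert p I) X (Suc r) (\<lambda>k. if k < r then (u k)(p:=0) else v)"
      using v False by (intro rank_one_sum_insert[OF pI]) (auto simp: rank_one_sum_def)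
    then show ?thesis by blast
  qed
qed

section \<open>Unitary matrices\<close>

lemma cnj_mult_self: "cnj z * z = complex_of_real ((cmod z)^2)"
  by (metis complex_norm_square mult.commute)

lemma sum_cnj_self: "(\<Sum>x\<in>A. cnj (f x) * f x) = complex_of_real (\<Sum>x\<in>A. (cmod (f x))^2)"
  by (simp add: cnj_mult_self)

lemma Re_cnj_mult_le: "2 * Re (cnj p * q) \<le> (cmod p)^2 + (cmod q)^2"
proof -
  have "0 \<le> (cmod (p - q))^2" by simp
  also have "(cmod (p - q))^2 = (cmod p)^2 + (cmod q)^2 - 2 * Re (cnj p * q)"
    by (simp only: cmod_power2) (simp add: power2_eq_square algebra_simps)
  finally show ?thesis by simp
qed

lemma Re_sum_cnj_mult_le:
  "2 * Re (\<Sum>x\<in>A. cnj (P x) * Q x) \<le> (\<Sum>x\<in>A. (cmod (P x))^2) + (\<Sum>x\<in>A. (cmod (Q x))^2)"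
proof -
  have "2 * Re (\<Sum>x\<in>A. cnj (P x) * Q x) = (\<Sum>x\<in>A. 2 * Re (cnj (P x) * Q x))"
    by (simp add: Re_sum sum_distrib_left)
  also have "\<dots> \<le> (\<Sum>x\<in>A. (cmod (P x))^2 + (cmod (Q x))^2)"
    by (intro sum_mono Re_cnj_mult_le)
  finally show ?thesis by (simp add: sum.distrib)
qed

lemma cmod_diff_scaled_square:
  fixes g z :: complex and l :: real
  shows "(cmod (g - of_real l * z))^2 = (cmod g)^2 - 2 * l * Re (cnj z * g) + l^2 * (cmod z)^2"
  by (simp only: cmod_power2) (simp add: power2_eq_square algebra_simps)

definition unitary_mat :: "nat \<Rightarrow> (nat \<Rightarrow> nat \<Rightarrow> complex) \<Rightarrow> bool" where
  "unitary_mat d U \<longleftrightarrow>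
     (\<forall>\<alpha><d. \<forall>\<alpha>'<d. (\<Sum>e<d. U \<alpha> e * cnj (U \<alpha>' e)) = (if \<alpha> = \<alpha>' then 1 else 0)) \<and>
     (\<forall>e<d. \<forall>e'<d. (\<Sum>\<gamma><d. cnj (U \<gamma> e) * U \<gamma> e') = (if e = e' then 1 else 0))"

lemma unitary_op_opB:
  assumes "unitary_op d {sysB N} (opB N U)"
  shows "unitary_mat d U"
proof -
  define b where "b = sysB N"
  define c :: "nat \<Rightarrow> cfg" where "c \<alpha> = (\<lambda>_. undefined)(b := \<alpha>)" for \<alpha>
  have cb: "\<alpha> < d \<Longrightarrow> c \<alpha> \<in> basis d {b}" for \<alpha> unfolding c_def by (intro basis_memI) auto
  have V: "opB N U x y = U (x b) (y b)" for x y unfolding opB_def b_def ..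
  have id: "idop {b} (c \<alpha>) (c \<alpha>') = (if \<alpha> = \<alpha>' then 1 else 0)" for \<alpha> \<alpha>'
    unfolding idop_def c_def by simp
  show ?thesis unfolding unitary_mat_def
  proof (intro conjI allI impI)
    fix \<alpha> \<alpha>' assume a: "\<alpha> < d" "\<alpha>' < d"
    have "mmul d {b} (opB N U) (adj (opB N U)) (c \<alpha>) (c \<alpha>') = idop {b} (c \<alpha>) (c \<alpha>')"
      using assms cb[OF a(1)] cb[OF a(2)] unfolding unitary_op_def b_def by blast
    moreover have "mmul d {b} (opB N U) (adj (opB N U)) (c \<alpha>) (c \<alpha>') = (\<Sum>e<d. U \<alpha> e * cnj (U \<alpha>' e))"
      unfolding mmul_def adj_def V sum_basis_singleton by (simp add: c_def)
    ultimately show "(\<Sum>e<d. U \<alpha> e * cnj (U \<alpha>' e)) = (if \<alpha> = \<alpha>' then 1 else 0)" unfolding id by simp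
  next
    fix \<alpha> \<alpha>' assume a: "\<alpha> < d" "\<alpha>' < d"
    have "mmul d {b} (adj (opB N U)) (opB N U) (c \<alpha>) (c \<alpha>') = idop {b} (c \<alpha>) (c \<alpha>')"
      using assms cb[OF a(1)] cb[OF a(2)] unfolding unitary_op_def b_def by blast
    moreover have "mmul d {b} (adj (opB N U)) (opB N U) (c \<alpha>) (c \<alpha>') = (\<Sum>e<d. cnj (U e \<alpha>) * U e \<alpha>')"
      unfolding mmul_def adj_def V sum_basis_singleton by (simp add: c_def)
    ultimately show "(\<Sum>e<d. cnj (U e \<alpha>) * U e \<alpha>') = (if \<alpha> = \<alpha>' then 1 else 0)" unfolding id by simp
  qed
qed

lemma unitary_mat_row_norm:
  assumes "unitary_mat d U" "\<alpha> < d"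
  shows "(\<Sum>e<d. (cmod (U \<alpha> e))^2) = 1"
proof -
  have "(\<Sum>e<d. cnj (U \<alpha> e) * U \<alpha> e) = 1"
    using assms unfolding unitary_mat_def by (simp add: mult.commute)
  then show ?thesis by (simp only: sum_cnj_self of_real_eq_1_iff)
qed

lemma unitary_mat_rows_orthonormal:
  assumes "unitary_mat d U" "\<alpha> < d" "\<alpha>' < d"
  shows "(\<Sum>e<d. cnj (U \<alpha> e) * U \<alpha>' e) = (if \<alpha> = \<alpha>' then 1 else 0)"
proof -
  have "cnj (\<Sum>e<d. U \<alpha> e * cnj (U \<alpha>' e)) = (if \<alpha> = \<alpha>' then 1 else 0)"
    using assms unfolding unitary_mat_def by simp
  then show ?thesis by (simp add: cnj_sum)
qed

lemma unitary_mat_conj_columns_orthonormal: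
  assumes "unitary_mat d U" "e < d" "e' < d"
  shows "(\<Sum>\<gamma><d. cnj (cnj (U \<gamma> e)) * cnj (U \<gamma> e')) = (if e = e' then 1 else 0)"
proof -
  have "cnj (\<Sum>\<gamma><d. cnj (U \<gamma> e) * U \<gamma> e') = (if e = e' then 1 else 0)"
    using assms unfolding unitary_mat_def by simp
  then show ?thesis by (simp add: cnj_sum)
qed

lemma isometry_sum_norm:
  fixes W :: "nat \<Rightarrow> nat \<Rightarrow> complex"
  assumes "\<And>e e'. e < d \<Longrightarrow> e' < d \<Longrightarrow> (\<Sum>\<gamma><d. cnj (W \<gamma> e) * W \<gamma> e') = (if e = e' then 1 else 0)"
  shows "(\<Sum>\<gamma><d. (cmod (\<Sum>e<d. W \<gamma> e * y e))^2) = (\<Sum>e<d. (cmod (y e))^2)"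
proof -
  have "(\<Sum>\<gamma><d. cnj (\<Sum>e<d. W \<gamma> e * y e) * (\<Sum>e<d. W \<gamma> e * y e))
      = (\<Sum>\<gamma><d. \<Sum>e<d. \<Sum>e'<d. cnj (y e) * y e' * (cnj (W \<gamma> e) * W \<gamma> e'))"
    by (simp add: cnj_sum sum_product algebra_simps) (rule sum.cong[OF refl], rule sum.swap)
  also have "\<dots> = (\<Sum>e<d. \<Sum>\<gamma><d. \<Sum>e'<d. cnj (y e) * y e' * (cnj (W \<gamma> e) * W \<gamma> e'))"
    by (rule sum.swap)
  also have "\<dots> = (\<Sum>e<d. \<Sum>e'<d. \<Sum>\<gamma><d. cnj (y e) * y e' * (cnj (W \<gamma> e) * W \<gamma> e'))"
    by (intro sum.cong refl sum.swap)
  also have "\<dots> = (\<Sum>e<d. \<Sum>e'<d. cnj (y e) * y e' * (\<Sum>\<gamma><d. cnj (W \<gamma> e) * W \<gamma> e'))"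
    by (simp add: sum_distrib_left)
  also have "\<dots> = (\<Sum>e<d. \<Sum>e'<d. cnj (y e) * y e' * (if e = e' then 1 else 0))"
    using assms by (intro sum.cong refl) simp
  also have "\<dots> = (\<Sum>e<d. cnj (y e) * y e)"
    by (simp add: if_distrib cong: if_cong)
  finally show ?thesis by (simp only: sum_cnj_self of_real_eq_iff)
qed

lemma unitary_mat_product_norm:
  assumes "unitary_mat d U" "unitary_mat d V"
  shows "(\<Sum>\<gamma><d. (cmod (\<Sum>\<alpha><d. (\<Sum>e<d. U \<alpha> e * cnj (V \<gamma> e)) * x \<alpha>))^2)
       = (\<Sum>\<alpha><d. (cmod (x \<alpha>))^2)"
proof -
  define y where "y e = (\<Sum>\<alpha><d. U \<alpha> e * x \<alpha>)" for e
  have "(\<Sum>\<alpha><d. (\<Sum>e<d. U \<alpha> e * cnj (V \<gamma> e)) * x \<alpha>) = (\<Sum>e<d. cnj (V \<gamma> e) * y e)" for \<gamma>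
    unfolding y_def sum_distrib_left sum_distrib_right
    by (subst sum.swap) (simp add: mult_ac)
  then have "(\<Sum>\<gamma><d. (cmod (\<Sum>\<alpha><d. (\<Sum>e<d. U \<alpha> e * cnj (V \<gamma> e)) * x \<alpha>))^2)
      = (\<Sum>\<gamma><d. (cmod (\<Sum>e<d. cnj (V \<gamma> e) * y e))^2)" by simp
  also have "\<dots> = (\<Sum>e<d. (cmod (y e))^2)"
    by (rule isometry_sum_norm) (use unitary_mat_conj_columns_orthonormal[OF assms(2)] in simp)
  also have "\<dots> = (\<Sum>\<alpha><d. (cmod (x \<alpha>))^2)"
    unfolding y_def
    by (rule isometry_sum_norm) (use unitary_mat_rows_orthonormal[OF assms(1)] in simp)
  finally show ?thesis .
qed

section \<open>The overlap inequality\<close>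

text \<open>A vector \<open>z a e\<close> lives on the systems \<open>S\<close> (configuration \<open>a\<close>) and one further system
  (index \<open>e\<close>). The contraction is its partial inner product on the pair (\<open>j\<close>, \<open>e\<close>) with
  \<open>\<Phi>\<^sub>j \<alpha> e = cnj (U j \<alpha> e)\<close>; for unitary \<open>U j\<close> the vector \<open>\<Phi>\<^sub>j\<close> has squared norm \<open>d\<close>, so the
  projection is \<open>d\<close> times the orthogonal projection of \<open>z\<close> onto the multiples of \<open>\<Phi>\<^sub>j\<close>.\<close>

definition pair_contraction ::
    "nat \<Rightarrow> (nat \<Rightarrow> nat \<Rightarrow> nat \<Rightarrow> complex) \<Rightarrow> (cfg \<Rightarrow> nat \<Rightarrow> complex) \<Rightarrow> nat \<Rightarrow> cfg \<Rightarrow> complex" where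
  "pair_contraction d U z j a = (\<Sum>\<alpha><d. \<Sum>e<d. U j \<alpha> e * z (a(j:=\<alpha>)) e)"

definition pair_projection ::
    "nat \<Rightarrow> (nat \<Rightarrow> nat \<Rightarrow> nat \<Rightarrow> complex) \<Rightarrow> (cfg \<Rightarrow> nat \<Rightarrow> complex) \<Rightarrow> nat \<Rightarrow> cfg \<Rightarrow> nat \<Rightarrow> complex"
  where "pair_projection d U z j a e = cnj (U j (a j) e) * pair_contraction d U z j a"

lemma pair_contraction_fun_upd [simp]: "pair_contraction d U z j (a(j:=\<beta>)) = pair_contraction d U z j a"
  by (simp add: pair_contraction_def)

lemma inner_pair_projection:
  assumes "j \<in> S" "d > 0"
  shows "(\<Sum>a\<in>basis d S. \<Sum>e<d. cnj (z a e) * pair_projection d U z j a e)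
       = complex_of_real (\<Sum>a\<in>basis d S. (cmod (pair_contraction d U z j a))^2) / of_nat d"
proof -
  let ?Y = "pair_contraction d U z j"
  let ?F = "\<lambda>a. ?Y a * cnj (\<Sum>e<d. U j (a j) e * z a e)"
  have "(\<Sum>a\<in>basis d S. \<Sum>e<d. cnj (z a e) * pair_projection d U z j a e) = (\<Sum>a\<in>basis d S. ?F a)"
    unfolding pair_projection_def by (simp add: cnj_sum sum_distrib_left mult_ac)
  moreover have "(\<Sum>\<alpha><d. ?F (a(j:=\<alpha>))) = cnj (?Y a) * ?Y a" for a
  proof -
    have "(\<Sum>\<alpha><d. ?F (a(j:=\<alpha>))) = ?Y a * cnj (\<Sum>\<alpha><d. \<Sum>e<d. U j \<alpha> e * z (a(j:=\<alpha>)) e)"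
      by (simp add: sum_distrib_left cnj_sum)
    then show ?thesis by (simp only: pair_contraction_def[symmetric] mult.commute)
  qed
  then have "of_nat d * (\<Sum>a\<in>basis d S. ?F a) = complex_of_real (\<Sum>a\<in>basis d S. (cmod (?Y a))^2)"
    by (simp only: sum_basis_sum_fun_upd[OF assms(1), symmetric] sum_cnj_self)
  ultimately show ?thesis using assms(2) by (simp add: eq_divide_eq mult.commute)
qed

lemma norm_pair_projection:
  assumes "j \<in> S" "unitary_mat d (U j)"
  shows "(\<Sum>a\<in>basis d S. \<Sum>e<d. (cmod (pair_projection d U z j a e))^2)
       = (\<Sum>a\<in>basis d S. (cmod (pair_contraction d U z j a))^2)"
proof (rule sum.cong[OF refl])
  fix a assume "a \<in> basis d S"
  then have "(\<Sum>e<d. (cmod (U j (a j) e))^2) = 1"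
    using assms basis_lessD unitary_mat_row_norm by blast
  then show "(\<Sum>e<d. (cmod (pair_projection d U z j a e))^2) = (cmod (pair_contraction d U z j a))^2"
    unfolding pair_projection_def by (simp add: norm_mult power_mult_distrib flip: sum_distrib_right)
qed

text \<open>Distinct projections overlap by at most \<open>1/d\<close>: averaging over the coordinates \<open>j\<close> and
  \<open>k\<close> turns the overlap into an inner product of two vectors related by the unitary
  \<open>U j \<cdot> (U k)\<^sup>\<dagger>\<close>.\<close>

lemma pair_projections_cross_le:
  assumes "j \<in> S" "k \<in> S" "j \<noteq> k" "d > 0" "unitary_mat d (U j)" "unitary_mat d (U k)"
  shows "2 * Re (\<Sum>a\<in>basis d S. \<Sum>e<d. cnj (pair_projection d U z j a e) * pair_projection d U z k a e)
     \<le> ((\<Sum>a\<in>basis d S. (cmod (pair_contraction d U z j a))^2)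
         + (\<Sum>a\<in>basis d S. (cmod (pair_contraction d U z k a))^2)) / real d"
proof -
  let ?B = "basis d S"
  let ?Y1 = "pair_contraction d U z j" and ?Y2 = "pair_contraction d U z k"
  define V where "V \<alpha> \<gamma> = (\<Sum>e<d. U j \<alpha> e * cnj (U k \<gamma> e))" for \<alpha> \<gamma>
  define H where "H a = cnj (?Y1 a) * ?Y2 a * V (a j) (a k)" for a
  define C where "C = (\<Sum>a\<in>?B. \<Sum>e<d. cnj (pair_projection d U z j a e) * pair_projection d U z k a e)"
  have C: "C = (\<Sum>a\<in>?B. H a)"
    unfolding C_def H_def V_def pair_projection_def
    by (intro sum.cong refl) (simp add: sum_distrib_left mult_ac)
  have "of_nat d * of_nat d * C = of_nat d * (\<Sum>a\<in>?B. \<Sum>\<alpha><d. H (a(j:=\<alpha>)))"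
    unfolding C by (simp add: sum_basis_sum_fun_upd[OF assms(1)])
  also have "\<dots> = (\<Sum>a\<in>?B. \<Sum>\<gamma><d. \<Sum>\<alpha><d. H ((a(k:=\<gamma>))(j:=\<alpha>)))"
    by (rule sum_basis_sum_fun_upd[OF assms(2), of "\<lambda>a. \<Sum>\<alpha><d. H (a(j:=\<alpha>))", symmetric])
  also have "\<dots> = (\<Sum>a\<in>?B. \<Sum>\<gamma><d. cnj (?Y1 (a(k:=\<gamma>))) * (\<Sum>\<alpha><d. V \<alpha> \<gamma> * ?Y2 (a(j:=\<alpha>))))"
  proof (intro sum.cong refl)
    fix a \<gamma>
    have "H ((a(k:=\<gamma>))(j:=\<alpha>)) = cnj (?Y1 (a(k:=\<gamma>))) * (V \<alpha> \<gamma> * ?Y2 (a(j:=\<alpha>)))" for \<alpha>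
    proof -
      have "(a(k:=\<gamma>))(j:=\<alpha>) = (a(j:=\<alpha>))(k:=\<gamma>)" using assms(3) by (rule fun_upd_twist[symmetric])
      then have "?Y2 ((a(k:=\<gamma>))(j:=\<alpha>)) = ?Y2 (a(j:=\<alpha>))" by simp
      moreover have "((a(k:=\<gamma>))(j:=\<alpha>)) j = \<alpha>" "((a(k:=\<gamma>))(j:=\<alpha>)) k = \<gamma>" using assms(3) by auto
      ultimately show ?thesis unfolding H_def by (simp add: mult_ac)
    qed
    then show "(\<Sum>\<alpha><d. H ((a(k:=\<gamma>))(j:=\<alpha>)))
        = cnj (?Y1 (a(k:=\<gamma>))) * (\<Sum>\<alpha><d. V \<alpha> \<gamma> * ?Y2 (a(j:=\<alpha>)))"
      by (simp add: sum_distrib_left)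
  qed
  finally have dC: "of_nat d * of_nat d * C
      = (\<Sum>a\<in>?B. \<Sum>\<gamma><d. cnj (?Y1 (a(k:=\<gamma>))) * (\<Sum>\<alpha><d. V \<alpha> \<gamma> * ?Y2 (a(j:=\<alpha>))))" .
  have "2 * (real d * real d * Re C)
      = (\<Sum>a\<in>?B. 2 * Re (\<Sum>\<gamma><d. cnj (?Y1 (a(k:=\<gamma>))) * (\<Sum>\<alpha><d. V \<alpha> \<gamma> * ?Y2 (a(j:=\<alpha>)))))"
    using arg_cong[OF dC, of Re] by (simp add: Re_sum sum_distrib_left)
  also have "\<dots> \<le> (\<Sum>a\<in>?B. (\<Sum>\<gamma><d. (cmod (?Y1 (a(k:=\<gamma>))))^2)
      + (\<Sum>\<gamma><d. (cmod (\<Sum>\<alpha><d. V \<alpha> \<gamma> * ?Y2 (a(j:=\<alpha>))))^2))"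
    by (intro sum_mono Re_sum_cnj_mult_le)
  also have "\<dots> = (\<Sum>a\<in>?B. (\<Sum>\<gamma><d. (cmod (?Y1 (a(k:=\<gamma>))))^2) + (\<Sum>\<alpha><d. (cmod (?Y2 (a(j:=\<alpha>))))^2))"
    unfolding V_def by (intro sum.cong refl arg_cong2[where f="(+)"] unitary_mat_product_norm assms(5,6))
  also have "\<dots> = real d * ((\<Sum>a\<in>?B. (cmod (?Y1 a))^2) + (\<Sum>a\<in>?B. (cmod (?Y2 a))^2))"
    using sum_basis_sum_fun_upd[OF assms(2), of "\<lambda>a. (cmod (?Y1 a))^2"]
      sum_basis_sum_fun_upd[OF assms(1), of "\<lambda>a. (cmod (?Y2 a))^2"]
    by (simp add: sum.distrib algebra_simps)
  finally have "real d * (2 * real d * Re C) \<le> real d * ((\<Sum>a\<in>?B. (cmod (?Y1 a))^2) + (\<Sum>a\<in>?B. (cmod (?Y2 a))^2))"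
    by (simp add: algebra_simps)
  then have "2 * real d * Re C \<le> (\<Sum>a\<in>?B. (cmod (?Y1 a))^2) + (\<Sum>a\<in>?B. (cmod (?Y2 a))^2)"
    using assms(4) by (simp add: mult_le_cancel_left_pos)
  then show ?thesis unfolding C_def[symmetric] using assms(4) by (simp add: field_simps)
qed

lemma sum_off_diagonal_pairs:
  fixes x :: "'a \<Rightarrow> real"
  assumes "finite J"
  shows "(\<Sum>j\<in>J. \<Sum>k\<in>J-{j}. x j + x k) = 2 * (real (card J) - 1) * (\<Sum>j\<in>J. x j)"
proof -
  have "(\<Sum>k\<in>J-{j}. x j + x k) = (real (card J) - 1) * x j + ((\<Sum>k\<in>J. x k) - x j)" if "j \<in> J" for j
  proof -
    have "card J \<ge> 1" using that assms card_0_eq by fastforce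
    then show ?thesis using that assms by (simp add: sum.distrib sum_diff1 card_Diff_singleton of_nat_diff)
  qed
  then have "(\<Sum>j\<in>J. \<Sum>k\<in>J-{j}. x j + x k) = (\<Sum>j\<in>J. (real (card J) - 1) * x j + ((\<Sum>k\<in>J. x k) - x j))"
    by simp
  also have "\<dots> = 2 * (real (card J) - 1) * (\<Sum>j\<in>J. x j)"
    by (simp add: sum.distrib sum_subtractf sum_distrib_left sum_distrib_right algebra_simps)
  finally show ?thesis .
qed

lemma norm_sum_pair_projections_le:
  assumes fin: "finite S" and JS: "J \<subseteq> S" and d: "d > 0" and U: "\<forall>j\<in>J. unitary_mat d (U j)"
  shows "(\<Sum>a\<in>basis d S. \<Sum>e<d. (cmod (\<Sum>j\<in>J. pair_projection d U z j a e))^2)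
      \<le> (1 + (real (card J) - 1) / real d) * (\<Sum>j\<in>J. \<Sum>a\<in>basis d S. (cmod (pair_contraction d U z j a))^2)"
proof -
  let ?B = "basis d S" and ?G = "pair_projection d U z"
  have finJ: "finite J" using JS fin finite_subset by blast
  define L where "L j = (\<Sum>a\<in>?B. (cmod (pair_contraction d U z j a))^2)" for j
  define C where "C j k = (\<Sum>a\<in>?B. \<Sum>e<d. cnj (?G j a e) * ?G k a e)" for j k
  have "complex_of_real (\<Sum>a\<in>?B. \<Sum>e<d. (cmod (\<Sum>j\<in>J. ?G j a e))^2)
      = (\<Sum>a\<in>?B. \<Sum>e<d. cnj (\<Sum>j\<in>J. ?G j a e) * (\<Sum>j\<in>J. ?G j a e))"
    by (simp only: sum_cnj_self of_real_sum)
  also have "\<dots> = (\<Sum>a\<in>?B. \<Sum>e<d. \<Sum>j\<in>J. \<Sum>k\<in>J. cnj (?G j a e) * ?G k a e)"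
    by (simp add: cnj_sum sum_product)
  also have "\<dots> = (\<Sum>a\<in>?B. \<Sum>j\<in>J. \<Sum>k\<in>J. \<Sum>e<d. cnj (?G j a e) * ?G k a e)"
  proof (rule sum.cong[OF refl])
    fix a
    have "(\<Sum>e<d. \<Sum>j\<in>J. \<Sum>k\<in>J. cnj (?G j a e) * ?G k a e)
        = (\<Sum>j\<in>J. \<Sum>e<d. \<Sum>k\<in>J. cnj (?G j a e) * ?G k a e)" by (rule sum.swap)
    also have "\<dots> = (\<Sum>j\<in>J. \<Sum>k\<in>J. \<Sum>e<d. cnj (?G j a e) * ?G k a e)"
      by (rule sum.cong[OF refl], rule sum.swap)
    finally show "(\<Sum>e<d. \<Sum>j\<in>J. \<Sum>k\<in>J. cnj (?G j a e) * ?G k a e)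
        = (\<Sum>j\<in>J. \<Sum>k\<in>J. \<Sum>e<d. cnj (?G j a e) * ?G k a e)" .
  qed
  also have "\<dots> = (\<Sum>j\<in>J. \<Sum>k\<in>J. C j k)"
    unfolding C_def by (subst sum.swap) (rule sum.cong[OF refl], rule sum.swap)
  finally have "(\<Sum>a\<in>?B. \<Sum>e<d. (cmod (\<Sum>j\<in>J. ?G j a e))^2) = Re (\<Sum>j\<in>J. \<Sum>k\<in>J. C j k)"
    by (metis Re_complex_of_real)
  also have "\<dots> = (\<Sum>j\<in>J. Re (C j j) + (\<Sum>k\<in>J-{j}. Re (C j k)))"
    using finJ by (simp add: Re_sum sum.remove)
  also have "\<dots> \<le> (\<Sum>j\<in>J. L j + (\<Sum>k\<in>J-{j}. (L j + L k) / (2 * real d)))"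
  proof (intro sum_mono add_mono)
    fix j assume j: "j \<in> J"
    show "Re (C j j) \<le> L j"
      using norm_pair_projection[of j S d U z] U j JS
      unfolding C_def L_def by (auto simp: sum_cnj_self subset_iff simp flip: of_real_sum)
    fix k assume "k \<in> J - {j}"
    then have "2 * Re (C j k) \<le> (L j + L k) / real d"
      unfolding C_def L_def using j JS U d by (intro pair_projections_cross_le) auto
    then show "Re (C j k) \<le> (L j + L k) / (2 * real d)" using d by (simp add: field_simps)
  qed
  also have "\<dots> = (\<Sum>j\<in>J. L j) + (\<Sum>j\<in>J. \<Sum>k\<in>J-{j}. L j + L k) / (2 * real d)"
    unfolding sum_divide_distrib by (rule sum.distrib)
  also have "\<dots> = (1 + (real (card J) - 1) / real d) * (\<Sum>j\<in>J. L j)"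
    unfolding sum_off_diagonal_pairs[OF finJ] using d by (simp add: field_simps)
  finally show ?thesis unfolding L_def .
qed

text \<open>Expanding \<open>0 \<le> \<parallel>\<Sum>\<^sub>j G\<^sub>j - \<lambda> z\<parallel>\<^sup>2\<close> with \<open>\<lambda> = |J| + d - 1\<close>, where \<open>G\<^sub>j\<close> are the pair
  projections: the inner products \<open>\<langle>z, G\<^sub>j\<rangle>\<close> give the left-hand side and the overlap bound controls
  \<open>\<parallel>\<Sum>\<^sub>j G\<^sub>j\<parallel>\<^sup>2\<close>.\<close>

lemma sum_pair_contraction_norm_le:
  assumes fin: "finite S" and JS: "J \<subseteq> S" and d: "d > 0" and U: "\<forall>j\<in>J. unitary_mat d (U j)"
    and Jne: "J \<noteq> {}"
  shows "(\<Sum>j\<in>J. \<Sum>a\<in>basis d S. (cmod (pair_contraction d U z j a))^2)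
      \<le> real d * (real (card J) + real d - 1) * (\<Sum>a\<in>basis d S. \<Sum>e<d. (cmod (z a e))^2)"
proof -
  let ?B = "basis d S"
  define g where "g a e = (\<Sum>j\<in>J. pair_projection d U z j a e)" for a e
  define L where "L = (\<Sum>j\<in>J. \<Sum>a\<in>?B. (cmod (pair_contraction d U z j a))^2)"
  define Z where "Z = (\<Sum>a\<in>?B. \<Sum>e<d. (cmod (z a e))^2)"
  define lam where "lam = real d + real (card J) - 1"
  have "finite J" using JS fin finite_subset by blast
  with Jne have "card J \<ge> 1" by (simp add: Suc_le_eq card_gt_0_iff)
  then have lam: "lam > 0" unfolding lam_def using d by simp
  have inner: "Re (\<Sum>a\<in>?B. \<Sum>e<d. cnj (z a e) * g a e) = L / real d"
  proof -
    have "(\<Sum>a\<in>?B. \<Sum>e<d. cnj (z a e) * g a e)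
        = (\<Sum>j\<in>J. \<Sum>a\<in>?B. \<Sum>e<d. cnj (z a e) * pair_projection d U z j a e)"
      unfolding g_def sum_distrib_left
      by (subst (2) sum.swap, subst sum.swap) (rule refl)
    also have "\<dots> = (\<Sum>j\<in>J. complex_of_real (\<Sum>a\<in>?B. (cmod (pair_contraction d U z j a))^2) / of_nat d)"
      using JS d by (intro sum.cong refl inner_pair_projection) auto
    finally show ?thesis unfolding L_def by (simp add: Re_sum sum_divide_distrib)
  qed
  have "(1 + (real (card J) - 1) / real d) * L = lam * (L / real d)"
    unfolding lam_def using d by (simp add: field_simps)
  then have norm_g: "(\<Sum>a\<in>?B. \<Sum>e<d. (cmod (g a e))^2) \<le> lam * (L / real d)"
    using norm_sum_pair_projections_le[OF fin JS d U, of z] unfolding g_def L_def by simp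
  have "0 \<le> (\<Sum>a\<in>?B. \<Sum>e<d. (cmod (g a e - of_real lam * z a e))^2)" by (intro sum_nonneg) auto
  also have "\<dots> = (\<Sum>a\<in>?B. \<Sum>e<d. (cmod (g a e))^2 - 2 * lam * Re (cnj (z a e) * g a e)
      + lam^2 * (cmod (z a e))^2)"
    unfolding cmod_diff_scaled_square ..
  also have "\<dots> = (\<Sum>a\<in>?B. \<Sum>e<d. (cmod (g a e))^2) - 2 * lam * Re (\<Sum>a\<in>?B. \<Sum>e<d. cnj (z a e) * g a e)
      + lam^2 * Z"
    unfolding Z_def by (simp only: sum.distrib sum_subtractf sum_distrib_left Re_sum)
  finally have "0 \<le> lam * (L / real d) - 2 * lam * (L / real d) + lam^2 * Z"
    using norm_g unfolding inner by linarith
  then have "lam * (L / real d) \<le> lam * (lam * Z)" by (simp add: power2_eq_square algebra_simps)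
  then have "L / real d \<le> lam * Z" using lam by (rule mult_left_le_imp_le)
  then show ?thesis unfolding L_def Z_def lam_def using d by (simp add: field_simps)
qed

section \<open>Coordinates of the protocol\<close>

lemma all_sys_eq: "all_sys N = {1..2*N+2}"
proof -
  have "sysA N ` {1..N} = {N+1..2*N}" unfolding sysA_def
    by (auto simp: image_iff intro!: bexI[where x="x - N" for x])
  then show ?thesis unfolding all_sys_def sysA'_def sysAt_def sysB_def by auto
qed

lemma alice_sys_eq: "alice_sys N = {N+1..2*N+1}"
proof -
  have "sysA N ` {1..N} = {N+1..2*N}" unfolding sysA_def
    by (auto simp: image_iff intro!: bexI[where x="x - N" for x])
  then show ?thesis unfolding alice_sys_def sysAt_def by auto
qed

lemma AtB_sys_eq: "AtB_sys N = {2*N+1, 2*N+2}"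
  unfolding AtB_sys_def sysAt_def sysB_def by simp

lemma shift_image: "(+) (N::nat) ` {1..N} = {N+1..2*N}"
  by (auto simp: image_iff intro!: bexI[where x="x - N" for x])

definition cfg_AtB :: "nat \<Rightarrow> nat \<Rightarrow> nat \<Rightarrow> cfg" where
  "cfg_AtB N s e = (\<lambda>k. if k = 2*N+1 then s else if k = 2*N+2 then e else undefined)"

definition alice_copy :: "nat \<Rightarrow> cfg \<Rightarrow> nat \<Rightarrow> cfg" where
  "alice_copy N x s = (\<lambda>k. if k \<in> {N+1..2*N} then x (k - N) else if k = 2*N+1 then s else undefined)"

lemma cfg_AtB_in_basis: "s < d \<Longrightarrow> e < d \<Longrightarrow> cfg_AtB N s e \<in> basis d (AtB_sys N)"
  unfolding cfg_AtB_def AtB_sys_eq by (intro basis_memI) auto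

lemma trace_AtB: "trace d (AtB_sys N) rho = (\<Sum>s<d. \<Sum>e<d. rho (cfg_AtB N s e) (cfg_AtB N s e))"
proof -
  have "((\<lambda>_. undefined)(2*N+2 := e))(2*N+1 := s) = cfg_AtB N s e" for s e
    unfolding cfg_AtB_def by (auto simp: fun_eq_iff)
  moreover have "2*N+1 \<noteq> 2*N+2" by simp
  ultimately show ?thesis unfolding trace_def AtB_sys_eq by (simp add: sum_basis_doubleton)
qed

lemma mmul_op_ext:
  assumes "S \<subseteq> U" "finite U" "x \<in> basis d U"
  shows "mmul d U (op_ext S X U) Y x y
       = (\<Sum>a\<in>basis d S. X (restrict x S) a * Y (merge S a (restrict x (U - S))) y)"
proof -
  let ?R = "U - S"
  have disj: "S \<inter> ?R = {}" and U: "S \<union> ?R = U" using assms(1) by auto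
  have xR: "restrict x ?R \<in> basis d ?R" using assms(3) by (intro restrict_in_basis) auto
  have "mmul d U (op_ext S X U) Y x y
      = (\<Sum>a\<in>basis d S. \<Sum>c\<in>basis d ?R. op_ext S X U x (merge S a c) * Y (merge S a c) y)"
    unfolding mmul_def using sum_basis_Un[OF disj] unfolding U .
  also have "\<dots> = (\<Sum>a\<in>basis d S. X (restrict x S) a * Y (merge S a (restrict x ?R)) y)"
  proof (rule sum.cong[OF refl])
    fix a assume a: "a \<in> basis d S"
    have ra: "restrict (merge S a c) S = a" for c
      using basis_undefined[OF a] unfolding merge_def by (auto simp: restrict_def)
    have eq: "(\<forall>k\<in>?R. x k = merge S a c k) \<longleftrightarrow> (\<forall>k\<in>?R. c k = x k)" for c
      unfolding merge_def by auto
    have "op_ext S X U x (merge S a c) * Y (merge S a c) y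
        = (if \<forall>k\<in>?R. c k = x k then X (restrict x S) a * Y (merge S a c) y else 0)" for c
      unfolding op_ext_def ra eq by simp
    then show "(\<Sum>c\<in>basis d ?R. op_ext S X U x (merge S a c) * Y (merge S a c) y)
        = X (restrict x S) a * Y (merge S a (restrict x ?R)) y"
      using sum_basis_restrict_delta[OF _ xR] assms(2) by simp
  qed
  finally show ?thesis .
qed

lemma sum_alice_copy:
  assumes "\<forall>l\<in>{1..N}. x l < d"
  shows "(\<Sum>a\<in>basis d (alice_sys N). if \<forall>l\<in>{1..N}. a (N+l) = x l then F a else 0)
       = (\<Sum>s<d. F (alice_copy N x s))"
proof -
  define Aa where "Aa = {N+1..2*N}"
  define t where "t = 2*N+1"
  define h where "h k = x (k - N)" for k
  have cond: "(\<forall>l\<in>{1..N}. b (N+l) = x l) \<longleftrightarrow> (\<forall>k\<in>Aa. b k = h k)" for b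
    unfolding Aa_def shift_image[symmetric] ball_simps(9) h_def by simp
  have hA: "restrict h Aa \<in> basis d Aa"
    unfolding Aa_def h_def by (intro basis_memI) (auto intro!: assms[rule_format])
  have Al: "alice_sys N = Aa \<union> {t}" and dj: "Aa \<inter> {t} = {}"
    unfolding alice_sys_eq Aa_def t_def by auto
  let ?G = "\<lambda>a. if \<forall>k\<in>Aa. a k = h k then F a else 0"
  have "(\<Sum>a\<in>basis d (alice_sys N). if \<forall>l\<in>{1..N}. a (N+l) = x l then F a else 0)
      = (\<Sum>a1\<in>basis d Aa. \<Sum>a2\<in>basis d {t}. ?G (merge Aa a1 a2))"
    unfolding cond Al by (rule sum_basis_Un[OF dj])
  also have "\<dots> = (\<Sum>a2\<in>basis d {t}. \<Sum>a1\<in>basis d Aa. ?G (merge Aa a1 a2))" by (rule sum.swap)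
  also have "\<dots> = (\<Sum>a2\<in>basis d {t}. F (merge Aa (restrict h Aa) a2))"
  proof (rule sum.cong[OF refl])
    fix a2
    have "?G (merge Aa a1 a2) = (if \<forall>k\<in>Aa. a1 k = h k then F (merge Aa a1 a2) else 0)" for a1
      unfolding merge_def by auto
    then show "(\<Sum>a1\<in>basis d Aa. ?G (merge Aa a1 a2)) = F (merge Aa (restrict h Aa) a2)"
      using sum_basis_restrict_delta[OF _ hA, where F="\<lambda>a1. F (merge Aa a1 a2)"] unfolding Aa_def by simp
  qed
  also have "\<dots> = (\<Sum>s<d. F (alice_copy N x s))"
  proof -
    have "merge Aa (restrict h Aa) ((\<lambda>_. undefined)(t:=s)) = alice_copy N x s" for s
      unfolding merge_def alice_copy_def h_def Aa_def t_def by (auto simp: fun_eq_iff)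
    then show ?thesis by (simp add: sum_basis_singleton)
  qed
  finally show ?thesis .
qed

lemma Omega_merge_alice:
  assumes "a \<in> basis d (alice_sys N)"
  shows "Omega d N rho (merge (alice_sys N) a x) y
       = (if \<forall>l\<in>{1..N}. a (N+l) = x l \<and> y l = y (N+l) then (1/of_nat d)^N else 0)
         * rho (cfg_AtB N (a (2*N+1)) (x (2*N+2))) (restrict y (AtB_sys N))"
proof -
  have "(\<Prod>l\<in>{1..N}. psi_plus d (sysA' N l) (sysA N l) (merge (alice_sys N) a x) y)
      = (\<Prod>l\<in>{1..N}. if a (N+l) = x l \<and> y l = y (N+l) then 1 / of_nat d else 0)"
    unfolding psi_plus_def sysA'_def sysA_def merge_def alice_sys_eq
    by (intro prod.cong refl) auto
  also have "\<dots> = (if \<forall>l\<in>{1..N}. a (N+l) = x l \<and> y l = y (N+l) then (1/of_nat d)^N else 0)"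
    by (subst prod_if_const) auto
  moreover have "restrict (merge (alice_sys N) a x) (AtB_sys N) = cfg_AtB N (a (2*N+1)) (x (2*N+2))"
    unfolding AtB_sys_eq cfg_AtB_def merge_def alice_sys_eq by (auto simp: fun_eq_iff)
  ultimately show ?thesis unfolding Omega_def by (simp only:)
qed

lemma mmul_povm_Omega:
  assumes x: "x \<in> basis d (all_sys N)"
  shows "mmul d (all_sys N) (op_ext (alice_sys N) Mi (all_sys N)) (Omega d N rho) x y
   = (if \<forall>l\<in>{1..N}. y l = y (N+l) then (1/of_nat d)^N else 0) *
     (\<Sum>s<d. Mi (restrict x (alice_sys N)) (alice_copy N x s)
              * rho (cfg_AtB N s (x (2*N+2))) (restrict y (AtB_sys N)))"
proof -
  let ?R = "all_sys N - alice_sys N"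
  let ?c = "if \<forall>l\<in>{1..N}. y l = y (N+l) then (1/of_nat d)^N else 0 :: complex"
  let ?rx = "restrict x (alice_sys N)" and ?ry = "restrict y (AtB_sys N)"
  have R: "restrict x ?R l = x l" if "l \<in> {1..N} \<union> {2*N+2}" for l
    using that unfolding all_sys_eq alice_sys_eq by auto
  have "mmul d (all_sys N) (op_ext (alice_sys N) Mi (all_sys N)) (Omega d N rho) x y
      = (\<Sum>a\<in>basis d (alice_sys N). Mi ?rx a * Omega d N rho (merge (alice_sys N) a (restrict x ?R)) y)"
    using x by (intro mmul_op_ext) (auto simp: all_sys_eq alice_sys_eq)
  also have "\<dots> = ?c * (\<Sum>a\<in>basis d (alice_sys N). if \<forall>l\<in>{1..N}. a (N+l) = x l
      then Mi ?rx a * rho (cfg_AtB N (a (2*N+1)) (x (2*N+2))) ?ry else 0)"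
    unfolding sum_distrib_left
  proof (rule sum.cong[OF refl])
    fix a assume "a \<in> basis d (alice_sys N)"
    then have "Omega d N rho (merge (alice_sys N) a (restrict x ?R)) y
        = (if (\<forall>l\<in>{1..N}. a (N+l) = x l) \<and> (\<forall>l\<in>{1..N}. y l = y (N+l)) then (1/of_nat d)^N else 0)
          * rho (cfg_AtB N (a (2*N+1)) (x (2*N+2))) ?ry"
      using R by (simp add: Omega_merge_alice ball_conj_distrib)
    then show "Mi ?rx a * Omega d N rho (merge (alice_sys N) a (restrict x ?R)) y
        = ?c * (if \<forall>l\<in>{1..N}. a (N+l) = x l
            then Mi ?rx a * rho (cfg_AtB N (a (2*N+1)) (x (2*N+2))) ?ry else 0)"
      by simp
  qed
  also have "\<dots> = ?c * (\<Sum>s<d. Mi ?rx (alice_copy N x s) * rho (cfg_AtB N s (x (2*N+2))) ?ry)"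
  proof -
    have "\<forall>l\<in>{1..N}. x l < d" using basis_lessD[OF x] by (auto simp: all_sys_eq)
    moreover have "alice_copy N x s (2*N+1) = s" for s unfolding alice_copy_def by auto
    ultimately show ?thesis
      using sum_alice_copy[of N x d "\<lambda>a. Mi ?rx a * rho (cfg_AtB N (a (2*N+1)) (x (2*N+2))) ?ry"]
      by simp
  qed
  finally show ?thesis .
qed

lemma povm_Omega_at_merge:
  fixes j N :: nat
  defines "Sj \<equiv> {j, 2*N+2}" and "P \<equiv> {1..N} - {j}"
  assumes j: "j \<in> {1..N}" and p: "p \<in> basis d Sj" and q: "q \<in> basis d Sj"
    and z: "z \<in> basis d P" and a: "a \<in> basis d (alice_sys N)"
  shows "mmul d (all_sys N) (op_ext (alice_sys N) Mi (all_sys N)) (Omega d N rho)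
           (merge Sj p (merge P z a)) (merge Sj q (merge P z a))
     = (if (\<forall>k\<in>P. z k = a (N+k)) \<and> a (N+j) = q j then (1/of_nat d)^N *
         (\<Sum>s<d. Mi a ((a(N+j := p j))(2*N+1 := s))
                  * rho (cfg_AtB N s (p (2*N+2))) (cfg_AtB N (a (2*N+1)) (q (2*N+2))))
        else 0)"
proof -
  let ?X = "merge Sj p (merge P z a)" and ?Y = "merge Sj q (merge P z a)"
  have "merge P z a \<in> basis d (all_sys N - Sj)"
  proof -
    have "all_sys N - Sj = P \<union> alice_sys N"
      unfolding all_sys_eq alice_sys_eq Sj_def P_def using j by auto
    then show ?thesis using merge_in_basis[OF z a] by simp
  qed
  moreover have "Sj \<union> (all_sys N - Sj) = all_sys N" unfolding Sj_def all_sys_eq using j by auto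
  ultimately have X: "?X \<in> basis d (all_sys N)" using merge_in_basis[OF p] by metis
  have Yc: "(\<forall>l\<in>{1..N}. ?Y l = ?Y (N+l)) \<longleftrightarrow> (\<forall>k\<in>P. z k = a (N+k)) \<and> a (N+j) = q j"
    using j unfolding merge_def Sj_def P_def by (auto split: if_splits)
  have rX: "restrict ?X (alice_sys N) = a"
  proof (rule ext)
    fix k show "restrict ?X (alice_sys N) k = a k"
      using basis_undefined[OF a, of k] j unfolding alice_sys_eq merge_def Sj_def P_def by auto
  qed
  have rY: "restrict ?Y (AtB_sys N) = cfg_AtB N (a (2*N+1)) (q (2*N+2))"
    unfolding AtB_sys_eq cfg_AtB_def merge_def Sj_def P_def using j by (auto simp: fun_eq_iff)
  have copy: "alice_copy N ?X s = (a(N+j := p j))(2*N+1 := s)" if "\<forall>k\<in>P. z k = a (N+k)" for s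
  proof (rule ext)
    fix k
    show "alice_copy N ?X s k = ((a(N+j := p j))(2*N+1 := s)) k"
    proof (cases "k \<in> {N+1..2*N}")
      case True
      then have "k - N \<in> {1..N}" "N + (k - N) = k" by auto
      then show ?thesis using that True j unfolding alice_copy_def merge_def Sj_def P_def by auto
    next
      case False
      then show ?thesis using basis_undefined[OF a, of k] j unfolding alice_copy_def alice_sys_eq by auto
    qed
  qed
  show ?thesis
    unfolding mmul_povm_Omega[OF X] Yc rX rY using copy by (auto simp: merge_def Sj_def)
qed

lemma ptrace_povm_Omega:
  assumes j: "j \<in> {1..N}" and p: "p \<in> basis d {j, 2*N+2}" and q: "q \<in> basis d {j, 2*N+2}"
  shows "ptrace d (all_sys N) {sysA' N j, sysB N}
           (mmul d (all_sys N) (op_ext (alice_sys N) Mi (all_sys N)) (Omega d N rho)) p q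
   = (1/of_nat d)^N * (\<Sum>a\<in>basis d (alice_sys N). if a (N+j) = q j then
        (\<Sum>s<d. Mi a ((a(N+j := p j))(2*N+1 := s))
                 * rho (cfg_AtB N s (p (2*N+2))) (cfg_AtB N (a (2*N+1)) (q (2*N+2)))) else 0)"
proof -
  define Sj where "Sj = {j, 2*N+2}"
  define P where "P = {1..N} - {j}"
  define MO where "MO = mmul d (all_sys N) (op_ext (alice_sys N) Mi (all_sys N)) (Omega d N rho)"
  define c where "c = (1/of_nat d :: complex)^N"
  define F where "F a = (\<Sum>s<d. Mi a ((a(N+j := p j))(2*N+1 := s))
      * rho (cfg_AtB N s (p (2*N+2))) (cfg_AtB N (a (2*N+1)) (q (2*N+2))))" for a
  have Sj: "{sysA' N j, sysB N} = Sj" unfolding Sj_def sysA'_def sysB_def by simp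
  have diff: "all_sys N - Sj = P \<union> alice_sys N"
    unfolding all_sys_eq alice_sys_eq Sj_def P_def using j by auto
  have dj: "P \<inter> alice_sys N = {}" unfolding P_def alice_sys_eq by auto
  have "ptrace d (all_sys N) Sj MO p q = (\<Sum>z\<in>basis d (P \<union> alice_sys N). MO (merge Sj p z) (merge Sj q z))"
    unfolding ptrace_def diff merge_def ..
  also have "\<dots> = (\<Sum>z\<in>basis d P. \<Sum>a\<in>basis d (alice_sys N). MO (merge Sj p (merge P z a)) (merge Sj q (merge P z a)))"
    by (rule sum_basis_Un[OF dj])
  also have "\<dots> = (\<Sum>a\<in>basis d (alice_sys N). \<Sum>z\<in>basis d P. MO (merge Sj p (merge P z a)) (merge Sj q (merge P z a)))"
    by (rule sum.swap)
  also have "\<dots> = (\<Sum>a\<in>basis d (alice_sys N). if a (N+j) = q j then c * F a else 0)"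
  proof (rule sum.cong[OF refl])
    fix a assume a: "a \<in> basis d (alice_sys N)"
    have hP: "restrict (\<lambda>k. a (N+k)) P \<in> basis d P"
      using basis_lessD[OF a] unfolding P_def alice_sys_eq by (intro basis_memI) auto
    have "(\<Sum>z\<in>basis d P. MO (merge Sj p (merge P z a)) (merge Sj q (merge P z a)))
        = (\<Sum>z\<in>basis d P. if \<forall>k\<in>P. z k = a (N+k) then (if a (N+j) = q j then c * F a else 0) else 0)"
    proof (rule sum.cong[OF refl])
      fix z assume "z \<in> basis d P"
      from povm_Omega_at_merge[OF j p q this[unfolded P_def] a, of Mi rho]
      show "MO (merge Sj p (merge P z a)) (merge Sj q (merge P z a))
          = (if \<forall>k\<in>P. z k = a (N+k) then (if a (N+j) = q j then c * F a else 0) else 0)"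
        unfolding MO_def F_def c_def Sj_def P_def by simp
    qed
    also have "\<dots> = (if a (N+j) = q j then c * F a else 0)"
      using sum_basis_restrict_delta[OF _ hP, where F="\<lambda>_. if a (N+j) = q j then c * F a else 0"]
      unfolding P_def by simp
    finally show "(\<Sum>z\<in>basis d P. MO (merge Sj p (merge P z a)) (merge Sj q (merge P z a)))
        = (if a (N+j) = q j then c * F a else 0)" .
  qed
  also have "\<dots> = c * (\<Sum>a\<in>basis d (alice_sys N). if a (N+j) = q j then F a else 0)"
    unfolding sum_distrib_left by (rule sum.cong) simp_all
  finally have "ptrace d (all_sys N) Sj MO p q
      = c * (\<Sum>a\<in>basis d (alice_sys N). if a (N+j) = q j then F a else 0)" .
  then show ?thesis by (simp only: MO_def Sj c_def F_def)
qed

lemma sum_psi_plus_column: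
  assumes jb: "j \<noteq> b" and p: "p \<in> basis d {j,b}"
  shows "(\<Sum>y\<in>basis d {j,b}. (if y j = y b then 1 else 0) * (G (y b) * (if y j = p j then 1 else 0))) = (G (p j) :: complex)"
proof -
  have pj: "p j < d" using basis_lessD[OF p] by auto
  have hb: "restrict (\<lambda>k. p j) {j,b} \<in> basis d {j,b}" using pj by (intro basis_memI) auto
  have "(\<Sum>y\<in>basis d {j,b}. (if y j = y b then 1 else 0) * (G (y b) * (if y j = p j then 1 else 0)))
      = (\<Sum>y\<in>basis d {j,b}. if \<forall>k\<in>{j,b}. y k = p j then G (p j) else 0)"
    by (intro sum.cong refl) auto
  also have "\<dots> = G (p j)" using sum_basis_restrict_delta[OF _ hb, of "\<lambda>_. G (p j)"] by simp
  finally show ?thesis .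
qed

lemma entanglement_fidelity_eq:
  assumes jb: "j \<noteq> b"
  shows "trace d {j,b} (mmul d {j,b} (psi_plus d j b) (mmul d {j,b} (mmul d {j,b} (op_ext {b} (\<lambda>x y. Um (x b) (y b)) {j,b}) \<sigma>) (adj (op_ext {b} (\<lambda>x y. Um (x b) (y b)) {j,b}))))
     = (1 / of_nat d) * (\<Sum>p\<in>basis d {j,b}. \<Sum>q\<in>basis d {j,b}. Um (p j) (p b) * \<sigma> p q * cnj (Um (q j) (q b)))"
proof -
  define S where "S = {j,b}"
  define V where "V = op_ext {b} (\<lambda>x y. Um (x b) (y b)) {j,b}"
  have Vy: "V y p = Um (y b) (p b) * (if y j = p j then 1 else 0)" for y p
    unfolding V_def op_ext_def using jb by (auto simp: restrict_def)
  define T where "T x y q p = ((if x j = x b then 1 else 0) * (if y j = y b then 1 else 0) / of_nat d) * (V y p * \<sigma> p q * cnj (V x q))" for x y q p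
  have "trace d S (mmul d S (psi_plus d j b) (mmul d S (mmul d S V \<sigma>) (adj V)))
      = (\<Sum>x\<in>basis d S. \<Sum>y\<in>basis d S. \<Sum>q\<in>basis d S. \<Sum>p\<in>basis d S. T x y q p)"
  proof -
    have "\<And>x y. psi_plus d j b x y = (if x j = x b then 1 else 0) * (if y j = y b then 1 else 0) / of_nat d"
      unfolding psi_plus_def by simp
    then show ?thesis unfolding trace_def mmul_def adj_def T_def
      by (simp add: sum_distrib_left sum_distrib_right sum_divide_distrib mult_ac)
  qed
  also have "\<dots> = (\<Sum>p\<in>basis d S. \<Sum>q\<in>basis d S. \<Sum>y\<in>basis d S. \<Sum>x\<in>basis d S. T x y q p)"
    by (rule sum_reverse4)
  also have "\<dots> = (\<Sum>p\<in>basis d S. \<Sum>q\<in>basis d S. (1 / of_nat d) *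
        ((\<Sum>y\<in>basis d S. (if y j = y b then 1 else 0) * V y p) * \<sigma> p q * (\<Sum>x\<in>basis d S. (if x j = x b then 1 else 0) * cnj (V x q))))"
    unfolding T_def by (simp add: sum_distrib_left sum_distrib_right sum_divide_distrib mult_ac)
  also have "\<dots> = (\<Sum>p\<in>basis d S. \<Sum>q\<in>basis d S. (1 / of_nat d) * (Um (p j) (p b) * \<sigma> p q * cnj (Um (q j) (q b))))"
  proof (intro sum.cong refl)
    fix p q assume p: "p \<in> basis d S" and q: "q \<in> basis d S"
    have "(\<Sum>y\<in>basis d S. (if y j = y b then 1 else 0) * V y p) = Um (p j) (p b)"
      unfolding Vy S_def using sum_psi_plus_column[OF jb p[unfolded S_def], of "\<lambda>e. Um e (p b)"] by simp
    moreover have "(\<Sum>x\<in>basis d S. (if x j = x b then 1 else 0) * cnj (V x q)) = cnj (Um (q j) (q b))"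
      unfolding Vy S_def using sum_psi_plus_column[OF jb q[unfolded S_def], of "\<lambda>e. cnj (Um e (q b))"]
      by (simp only: complex_cnj_mult if_distrib[of cnj] complex_cnj_one complex_cnj_zero)
    ultimately show "(1 / of_nat d) * ((\<Sum>y\<in>basis d S. (if y j = y b then 1 else 0) * V y p) * \<sigma> p q * (\<Sum>x\<in>basis d S. (if x j = x b then 1 else 0) * cnj (V x q)))
        = (1 / of_nat d) * (Um (p j) (p b) * \<sigma> p q * cnj (Um (q j) (q b)))" by simp
  qed
  finally show ?thesis unfolding S_def V_def by (simp add: sum_distrib_left)
qed

text \<open>The partial inner product over \<open>\<tilde>A\<close> of a vector \<open>u\<close> on \<open>\<tilde>A B\<close> with a vector \<open>w\<close> on
  Alice's systems: a vector on \<open>A\<^sub>1 \<dots> A\<^sub>N\<close> and \<open>B\<close> that ignores the \<open>\<tilde>A\<close> entry of \<open>c\<close>.\<close>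

definition tilde_contraction ::
    "nat \<Rightarrow> nat \<Rightarrow> (cfg \<Rightarrow> complex) \<Rightarrow> (cfg \<Rightarrow> complex) \<Rightarrow> cfg \<Rightarrow> nat \<Rightarrow> complex" where
  "tilde_contraction d N u w c e = (\<Sum>s<d. u (cfg_AtB N s e) * cnj (w (c(2*N+1 := s))))"

lemma sum_fiber_cnj_mult:
  fixes X Y :: "cfg \<Rightarrow> complex"
  assumes "jj \<in> A" "t \<in> A" "jj \<noteq> t"
    and Yj: "\<And>a \<alpha>. Y (a(jj:=\<alpha>)) = Y a" and Yt: "\<And>a s. Y (a(t:=s)) = Y a"
    and YX: "\<And>a. Y a = (\<Sum>s<d. \<Sum>\<alpha><d. X ((a(t:=s))(jj:=\<alpha>)))"
  shows "of_nat d * of_nat d * (\<Sum>a\<in>basis d A. cnj (X a) * Y a) = (\<Sum>a\<in>basis d A. cnj (Y a) * Y a)"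
proof -
  have "of_nat d * (\<Sum>a\<in>basis d A. cnj (X a) * Y a) = (\<Sum>a\<in>basis d A. \<Sum>\<alpha><d. cnj (X (a(jj:=\<alpha>))) * Y (a(jj:=\<alpha>)))"
    by (rule sum_basis_sum_fun_upd[OF assms(1), symmetric])
  also have "\<dots> = (\<Sum>a\<in>basis d A. cnj (\<Sum>\<alpha><d. X (a(jj:=\<alpha>))) * Y a)"
    by (simp add: Yj cnj_sum sum_distrib_right)
  finally have e1: "of_nat d * (\<Sum>a\<in>basis d A. cnj (X a) * Y a) = (\<Sum>a\<in>basis d A. cnj (\<Sum>\<alpha><d. X (a(jj:=\<alpha>))) * Y a)" .
  have "of_nat d * (\<Sum>a\<in>basis d A. cnj (\<Sum>\<alpha><d. X (a(jj:=\<alpha>))) * Y a)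
      = (\<Sum>a\<in>basis d A. \<Sum>s<d. cnj (\<Sum>\<alpha><d. X ((a(t:=s))(jj:=\<alpha>))) * Y (a(t:=s)))"
    by (rule sum_basis_sum_fun_upd[OF assms(2), symmetric])
  also have "\<dots> = (\<Sum>a\<in>basis d A. cnj (\<Sum>s<d. \<Sum>\<alpha><d. X ((a(t:=s))(jj:=\<alpha>))) * Y a)"
    by (simp add: Yt cnj_sum sum_distrib_right)
  also have "\<dots> = (\<Sum>a\<in>basis d A. cnj (Y a) * Y a)" by (simp only: YX[symmetric])
  finally show ?thesis using e1 by (simp add: mult.assoc)
qed

lemma contracted_term_fiber_form:
  assumes j: "j \<in> {1..N}"
  shows "(\<Sum>p\<in>basis d {j,2*N+2}. \<Sum>q\<in>basis d {j,2*N+2}. \<Sum>a\<in>basis d (alice_sys N). \<Sum>s<d.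
      Uf (N+j) (p j) (p (2*N+2)) * cnj (Uf (N+j) (q j) (q (2*N+2))) * (if a (N+j) = q j then 1 else 0) *
      (w a * cnj (w ((a(N+j := p j))(2*N+1 := s)))) * (u (cfg_AtB N s (p (2*N+2))) * cnj (u (cfg_AtB N (a (2*N+1)) (q (2*N+2))))))
    = (\<Sum>a\<in>basis d (alice_sys N). cnj (cnj (w a) * (\<Sum>e<d. Uf (N+j) (a (N+j)) e * u (cfg_AtB N (a (2*N+1)) e)))
        * pair_contraction d Uf (tilde_contraction d N u w) (N+j) a)"
proof -
  define b where "b = 2*N+2"
  define t where "t = 2*N+1"
  define jj where "jj = N+j"
  define A where "A = alice_sys N"
  define Y where "Y = pair_contraction d Uf (tilde_contraction d N u w) jj"
  define X where "X a = cnj (w a) * (\<Sum>e<d. Uf jj (a jj) e * u (cfg_AtB N (a t) e))" for a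
  have jb: "j \<noteq> b" unfolding b_def using j by auto
  have jjA: "jj \<in> A" unfolding jj_def A_def alice_sys_eq using j by auto
  define f where "f p q a s = Uf jj (p j) (p b) * cnj (Uf jj (q j) (q b)) * (if a jj = q j then 1 else 0) *
      (w a * cnj (w ((a(jj := p j))(t := s)))) * (u (cfg_AtB N s (p b)) * cnj (u (cfg_AtB N (a t) (q b))))" for p q a s
  let ?P = "basis d {j,b}"
  have "(\<Sum>p\<in>?P. \<Sum>q\<in>?P. \<Sum>a\<in>basis d A. \<Sum>s<d. f p q a s) = (\<Sum>p\<in>?P. \<Sum>a\<in>basis d A. \<Sum>q\<in>?P. \<Sum>s<d. f p q a s)"
    by (rule sum.cong[OF refl], rule sum.swap)
  also have "\<dots> = (\<Sum>a\<in>basis d A. \<Sum>p\<in>?P. \<Sum>q\<in>?P. \<Sum>s<d. f p q a s)"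
    by (rule sum.swap)
  also have "\<dots> = (\<Sum>a\<in>basis d A. cnj (X a) * Y a)"
  proof (rule sum.cong[OF refl])
    fix a assume a: "a \<in> basis d A"
    define Qa where "Qa = (\<Sum>q\<in>?P. (if a jj = q j then 1 else 0) * cnj (Uf jj (q j) (q b)) * cnj (u (cfg_AtB N (a t) (q b))))"
    define Ra where "Ra = (\<Sum>p\<in>?P. \<Sum>s<d. Uf jj (p j) (p b) * cnj (w ((a(jj := p j))(t := s))) * u (cfg_AtB N s (p b)))"
    have "(\<Sum>p\<in>?P. \<Sum>q\<in>?P. \<Sum>s<d. f p q a s) = (w a * Qa) * Ra"
      unfolding Qa_def Ra_def f_def by (simp add: sum_distrib_left sum_distrib_right mult_ac)
    also have "w a * Qa = cnj (X a)"
    proof -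
      have ajj: "a jj < d" using basis_lessD[OF a jjA] .
      have "Qa = (\<Sum>\<alpha><d. \<Sum>e<d. (if a jj = \<alpha> then 1 else 0) * cnj (Uf jj \<alpha> e) * cnj (u (cfg_AtB N (a t) e)))"
        unfolding Qa_def by (rule sum_basis_doubleton_coords[OF jb])
      also have "\<dots> = (\<Sum>e<d. cnj (Uf jj (a jj) e) * cnj (u (cfg_AtB N (a t) e)))"
      proof -
        have "\<And>\<alpha>. (\<Sum>e<d. (if a jj = \<alpha> then 1 else 0) * cnj (Uf jj \<alpha> e) * cnj (u (cfg_AtB N (a t) e)))
            = (if \<alpha> = a jj then (\<Sum>e<d. cnj (Uf jj \<alpha> e) * cnj (u (cfg_AtB N (a t) e))) else 0)"
          by auto
        then show ?thesis using ajj by (simp add: sum.delta)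
      qed
      finally show ?thesis unfolding X_def by (simp add: cnj_sum sum_distrib_left)
    qed
    also have "Ra = Y a"
    proof -
      have "Ra = (\<Sum>\<alpha><d. \<Sum>e<d. \<Sum>s<d. Uf jj \<alpha> e * cnj (w ((a(jj := \<alpha>))(t := s))) * u (cfg_AtB N s e))"
        unfolding Ra_def by (rule sum_basis_doubleton_coords[OF jb])
      also have "\<dots> = Y a" unfolding Y_def pair_contraction_def tilde_contraction_def t_def
        by (simp add: sum_distrib_left mult_ac)
      finally show ?thesis .
    qed
    finally show "(\<Sum>p\<in>?P. \<Sum>q\<in>?P. \<Sum>s<d. f p q a s) = cnj (X a) * Y a" .
  qed
  finally show ?thesis unfolding f_def X_def Y_def b_def t_def jj_def A_def .
qed

lemma contracted_term_eq:
  assumes j: "j \<in> {1..N}" and d: "d > 0"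
  shows "(\<Sum>p\<in>basis d {j,2*N+2}. \<Sum>q\<in>basis d {j,2*N+2}. \<Sum>a\<in>basis d (alice_sys N). \<Sum>s<d.
      Uf (N+j) (p j) (p (2*N+2)) * cnj (Uf (N+j) (q j) (q (2*N+2))) * (if a (N+j) = q j then 1 else 0) *
      (w a * cnj (w ((a(N+j := p j))(2*N+1 := s)))) * (u (cfg_AtB N s (p (2*N+2))) * cnj (u (cfg_AtB N (a (2*N+1)) (q (2*N+2))))))
    = (\<Sum>a\<in>basis d (alice_sys N). cnj (pair_contraction d Uf (tilde_contraction d N u w) (N+j) a) * pair_contraction d Uf (tilde_contraction d N u w) (N+j) a) / (of_nat d * of_nat d)"
proof -
  define t where "t = 2*N+1"
  define jj where "jj = N+j"
  define A where "A = alice_sys N"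
  define Y where "Y = pair_contraction d Uf (tilde_contraction d N u w) jj"
  define X where "X a = cnj (w a) * (\<Sum>e<d. Uf jj (a jj) e * u (cfg_AtB N (a t) e))" for a
  have jjA: "jj \<in> A" and tA: "t \<in> A" and jjt: "jj \<noteq> t"
    unfolding jj_def A_def t_def alice_sys_eq using j by auto
  have upd: "((a(t:=s))(jj:=\<alpha>))(t:=s') = (a(jj:=\<alpha>))(t:=s')" for a s \<alpha> s'
    using jjt by (auto simp: fun_eq_iff)
  have Yj: "Y (a(jj:=\<alpha>)) = Y a" for a \<alpha> unfolding Y_def by (rule pair_contraction_fun_upd)
  have Yt: "Y (a(t:=s)) = Y a" for a s
    unfolding Y_def pair_contraction_def tilde_contraction_def t_def[symmetric] using upd by simp
  have YX: "Y a = (\<Sum>s<d. \<Sum>\<alpha><d. X ((a(t:=s))(jj:=\<alpha>)))" for a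
  proof -
    have tw: "(a(t:=s))(jj:=\<alpha>) = (a(jj:=\<alpha>))(t:=s)" for s \<alpha> using jjt by (auto simp: fun_eq_iff)
    have "Y a = (\<Sum>\<alpha><d. \<Sum>e<d. \<Sum>s<d. Uf jj \<alpha> e * (u (cfg_AtB N s e) * cnj (w ((a(jj:=\<alpha>))(t:=s)))))"
      unfolding Y_def pair_contraction_def tilde_contraction_def t_def by (simp add: sum_distrib_left)
    also have "\<dots> = (\<Sum>\<alpha><d. \<Sum>s<d. \<Sum>e<d. Uf jj \<alpha> e * (u (cfg_AtB N s e) * cnj (w ((a(jj:=\<alpha>))(t:=s)))))"
      by (rule sum.cong[OF refl], rule sum.swap)
    also have "\<dots> = (\<Sum>s<d. \<Sum>\<alpha><d. \<Sum>e<d. Uf jj \<alpha> e * (u (cfg_AtB N s e) * cnj (w ((a(jj:=\<alpha>))(t:=s)))))"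
      by (rule sum.swap)
    also have "\<dots> = (\<Sum>s<d. \<Sum>\<alpha><d. X ((a(t:=s))(jj:=\<alpha>)))"
      unfolding X_def tw using jjt by (simp add: sum_distrib_left mult_ac)
    finally show ?thesis .
  qed
  have "of_nat d * of_nat d * (\<Sum>a\<in>basis d A. cnj (X a) * Y a) = (\<Sum>a\<in>basis d A. cnj (Y a) * Y a)"
    by (rule sum_fiber_cnj_mult[OF jjA tA jjt Yj Yt YX])
  then have "(\<Sum>a\<in>basis d A. cnj (X a) * Y a) = (\<Sum>a\<in>basis d A. cnj (Y a) * Y a) / (of_nat d * of_nat d)"
    using d by (simp add: field_simps)
  then show ?thesis
    using contracted_term_fiber_form[OF j, where d=d and Uf=Uf and w=w and u=u] unfolding t_def jj_def A_def Y_def X_def by simp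
qed

lemma success_term_entries:
  assumes j: "j \<in> {1..N}"
  shows "(let S = {sysA' N j, sysB N};
            sigma = ptrace d (all_sys N) S
                      (mmul d (all_sys N) (op_ext (alice_sys N) Mi (all_sys N)) (Omega d N rho));
            V = op_ext {sysB N} (opB N (Uf (N+j))) S
        in trace d S (mmul d S (psi_plus d (sysA' N j) (sysB N))
                        (mmul d S (mmul d S V sigma) (adj V))))
    = (1/of_nat d)^(N+1) * (\<Sum>p\<in>basis d {j,2*N+2}. \<Sum>q\<in>basis d {j,2*N+2}. \<Sum>a\<in>basis d (alice_sys N). \<Sum>s<d.
        Uf (N+j) (p j) (p (2*N+2)) * cnj (Uf (N+j) (q j) (q (2*N+2))) * (if a (N+j) = q j then 1 else 0)
        * (Mi a ((a(N+j := p j))(2*N+1 := s))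
           * rho (cfg_AtB N s (p (2*N+2))) (cfg_AtB N (a (2*N+1)) (q (2*N+2)))))"
proof -
  define b where "b = 2*N+2"
  define t where "t = 2*N+1"
  define jj where "jj = N+j"
  define Al where "Al = alice_sys N"
  define Um where "Um = Uf jj"
  define MO where "MO = mmul d (all_sys N) (op_ext (alice_sys N) Mi (all_sys N)) (Omega d N rho)"
  define \<sigma> where "\<sigma> = ptrace d (all_sys N) {sysA' N j, sysB N} MO"
  have jb: "j \<noteq> b" unfolding b_def using j by auto
  have Seq: "{sysA' N j, sysB N} = {j, b}" unfolding sysA'_def sysB_def b_def by simp
  define C where "C p q a = Um (p j) (p b) * cnj (Um (q j) (q b)) * (if a jj = q j then 1 else 0)" for p q a
  define a' where "a' a p s = (a(jj := p j))(t := s)" for a :: cfg and p :: cfg and s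
  let ?P = "basis d {j,b}"
  have "(let S = {sysA' N j, sysB N};
            sigma = ptrace d (all_sys N) S MO;
            V = op_ext {sysB N} (opB N (Uf (N+j))) S
        in trace d S (mmul d S (psi_plus d (sysA' N j) (sysB N))
                        (mmul d S (mmul d S V sigma) (adj V))))
      = trace d {j,b} (mmul d {j,b} (psi_plus d j b) (mmul d {j,b} (mmul d {j,b} (op_ext {b} (\<lambda>x y. Um (x b) (y b)) {j,b}) \<sigma>) (adj (op_ext {b} (\<lambda>x y. Um (x b) (y b)) {j,b}))))"
    unfolding Let_def Seq \<sigma>_def Um_def jj_def
    by (simp add: sysA'_def sysB_def b_def opB_def)
  also have "\<dots> = (1 / of_nat d) * (\<Sum>p\<in>?P. \<Sum>q\<in>?P. Um (p j) (p b) * \<sigma> p q * cnj (Um (q j) (q b)))"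
    by (rule entanglement_fidelity_eq[OF jb])
  also have "\<dots> = (1/of_nat d)^(N+1) * (\<Sum>p\<in>?P. \<Sum>q\<in>?P. \<Sum>a\<in>basis d Al. \<Sum>s<d.
        C p q a * (Mi a (a' a p s) * rho (cfg_AtB N s (p b)) (cfg_AtB N (a t) (q b))))"
  proof -
    have "\<And>p q. p \<in> ?P \<Longrightarrow> q \<in> ?P \<Longrightarrow> Um (p j) (p b) * \<sigma> p q * cnj (Um (q j) (q b))
        = (1/of_nat d)^N * (\<Sum>a\<in>basis d Al. \<Sum>s<d. C p q a * (Mi a (a' a p s) * rho (cfg_AtB N s (p b)) (cfg_AtB N (a t) (q b))))"
    proof -
      fix p q assume p: "p \<in> ?P" and q: "q \<in> ?P"
      have if_sum: "(if c then (\<Sum>s\<in>A. X s) else 0) = (\<Sum>s\<in>A. (if c then 1 else 0) * (X s :: complex))"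
        for c A X by simp
      have s2: "\<sigma> p q = (1/of_nat d)^N * (\<Sum>a\<in>basis d Al. if a jj = q j then
          (\<Sum>s<d. Mi a (a' a p s) * rho (cfg_AtB N s (p b)) (cfg_AtB N (a t) (q b))) else 0)"
        unfolding \<sigma>_def MO_def Al_def a'_def jj_def t_def b_def
        by (rule ptrace_povm_Omega[OF j p[unfolded b_def] q[unfolded b_def]])
      show "Um (p j) (p b) * \<sigma> p q * cnj (Um (q j) (q b))
        = (1/of_nat d)^N * (\<Sum>a\<in>basis d Al. \<Sum>s<d. C p q a * (Mi a (a' a p s) * rho (cfg_AtB N s (p b)) (cfg_AtB N (a t) (q b))))"
        unfolding s2 C_def if_sum by (simp add: sum_distrib_left sum_distrib_right mult_ac)
    qed
    then have "(\<Sum>p\<in>?P. \<Sum>q\<in>?P. Um (p j) (p b) * \<sigma> p q * cnj (Um (q j) (q b)))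
       = (\<Sum>p\<in>?P. \<Sum>q\<in>?P. (1/of_nat d)^N * (\<Sum>a\<in>basis d Al. \<Sum>s<d. C p q a * (Mi a (a' a p s) * rho (cfg_AtB N s (p b)) (cfg_AtB N (a t) (q b)))))"
      by (intro sum.cong refl) auto
    then show ?thesis by (simp add: sum_distrib_left)
  qed
  finally show ?thesis unfolding MO_def C_def a'_def Um_def jj_def b_def t_def Al_def by simp
qed

text \<open>The power \<open>d^(N+3)\<close> collects \<open>1/d\<close> from each of the \<open>N + 1\<close> maximally entangled
  states and \<open>1/d\<^sup>2\<close> from averaging over the \<open>A\<^sub>j\<close> and \<open>\<tilde>A\<close> coordinates in the last step.\<close>

lemma success_term_eq:
  assumes j: "j \<in> {1..N}" and d: "d > 0"
    and Mdec: "rank_one_sum (basis d (alice_sys N)) Mi r w"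
    and Rdec: "rank_one_sum (basis d (AtB_sys N)) rho rr u"
  shows "(let S = {sysA' N j, sysB N};
            sigma = ptrace d (all_sys N) S
                      (mmul d (all_sys N) (op_ext (alice_sys N) Mi (all_sys N)) (Omega d N rho));
            V = op_ext {sysB N} (opB N (Uf (N+j))) S
        in trace d S (mmul d S (psi_plus d (sysA' N j) (sysB N))
                        (mmul d S (mmul d S V sigma) (adj V))))
    = complex_of_real ((\<Sum>k<r. \<Sum>m<rr. \<Sum>a\<in>basis d (alice_sys N).
        (cmod (pair_contraction d Uf (tilde_contraction d N (u m) (w k)) (N+j) a))^2) / real d ^ (N+3))"
    (is "?lhs = ?rhs")
proof -
  define b where "b = 2*N+2"
  define t where "t = 2*N+1"
  define jj where "jj = N+j"
  define Al where "Al = alice_sys N"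
  define C where "C p q a = Uf jj (p j) (p b) * cnj (Uf jj (q j) (q b)) * (if a jj = q j then 1 else 0)" for p q a
  define a' where "a' a p s = (a(jj := p j))(t := s)" for a :: cfg and p :: cfg and s
  let ?P = "basis d {j,b}"
  have "(\<Sum>p\<in>?P. \<Sum>q\<in>?P. \<Sum>a\<in>basis d Al. \<Sum>s<d. C p q a * (Mi a (a' a p s) * rho (cfg_AtB N s (p b)) (cfg_AtB N (a t) (q b))))
      = (\<Sum>p\<in>?P. \<Sum>q\<in>?P. \<Sum>a\<in>basis d Al. \<Sum>s<d. \<Sum>k<r. \<Sum>m<rr.
           C p q a * (w k a * cnj (w k (a' a p s))) * (u m (cfg_AtB N s (p b)) * cnj (u m (cfg_AtB N (a t) (q b)))))"
  proof (intro sum.cong refl)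
    fix p q a s assume p: "p \<in> ?P" and q: "q \<in> ?P" and a: "a \<in> basis d Al" and s: "s \<in> {..<d}"
    have pj: "p j < d" and pb: "p b < d" and qb: "q b < d" using basis_lessD[OF p] basis_lessD[OF q] by auto
    have jjA: "jj \<in> Al" and tA: "t \<in> Al" unfolding jj_def t_def Al_def alice_sys_eq using j by auto
    have at: "a t < d" using basis_lessD[OF a tA] .
    have a'b: "a' a p s \<in> basis d Al" unfolding a'_def using a pj s jjA tA by (intro fun_upd_in_basis) auto
    have "Mi a (a' a p s) = (\<Sum>k<r. w k a * cnj (w k (a' a p s)))" using Mdec a a'b unfolding Al_def rank_one_sum_def by blast
    moreover have "rho (cfg_AtB N s (p b)) (cfg_AtB N (a t) (q b)) = (\<Sum>m<rr. u m (cfg_AtB N s (p b)) * cnj (u m (cfg_AtB N (a t) (q b))))"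
    proof -
      have sd: "s < d" using s by simp
      show ?thesis using Rdec cfg_AtB_in_basis[OF sd pb] cfg_AtB_in_basis[OF at qb] unfolding rank_one_sum_def by blast
    qed
    ultimately show "C p q a * (Mi a (a' a p s) * rho (cfg_AtB N s (p b)) (cfg_AtB N (a t) (q b)))
      = (\<Sum>k<r. \<Sum>m<rr. C p q a * (w k a * cnj (w k (a' a p s))) * (u m (cfg_AtB N s (p b)) * cnj (u m (cfg_AtB N (a t) (q b)))))"
      by (simp add: sum_product sum_distrib_left mult_ac) (rule sum.swap)
  qed
  also have "\<dots> = (\<Sum>k<r. \<Sum>p\<in>?P. \<Sum>q\<in>?P. \<Sum>a\<in>basis d Al. \<Sum>s<d. \<Sum>m<rr.
           C p q a * (w k a * cnj (w k (a' a p s))) * (u m (cfg_AtB N s (p b)) * cnj (u m (cfg_AtB N (a t) (q b)))))"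
    by (rule sum_swap_innermost4)
  also have "\<dots> = (\<Sum>k<r. \<Sum>m<rr. \<Sum>p\<in>?P. \<Sum>q\<in>?P. \<Sum>a\<in>basis d Al. \<Sum>s<d.
           C p q a * (w k a * cnj (w k (a' a p s))) * (u m (cfg_AtB N s (p b)) * cnj (u m (cfg_AtB N (a t) (q b)))))"
    by (rule sum.cong[OF refl], rule sum_swap_innermost4)
  also have "\<dots> = (\<Sum>k<r. \<Sum>m<rr. (\<Sum>a\<in>basis d (alice_sys N). cnj (pair_contraction d Uf (tilde_contraction d N (u m) (w k)) (N+j) a) * pair_contraction d Uf (tilde_contraction d N (u m) (w k)) (N+j) a) / (of_nat d * of_nat d))"
  proof (intro sum.cong refl)
    fix k m
    show "(\<Sum>p\<in>?P. \<Sum>q\<in>?P. \<Sum>a\<in>basis d Al. \<Sum>s<d.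
           C p q a * (w k a * cnj (w k (a' a p s))) * (u m (cfg_AtB N s (p b)) * cnj (u m (cfg_AtB N (a t) (q b)))))
        = (\<Sum>a\<in>basis d (alice_sys N). cnj (pair_contraction d Uf (tilde_contraction d N (u m) (w k)) (N+j) a) * pair_contraction d Uf (tilde_contraction d N (u m) (w k)) (N+j) a) / (of_nat d * of_nat d)"
      using contracted_term_eq[OF j d, of Uf "w k" "u m"] unfolding C_def a'_def jj_def Al_def b_def t_def .
  qed
  finally have "?lhs = (1/of_nat d)^(N+1) * (\<Sum>k<r. \<Sum>m<rr. (\<Sum>a\<in>basis d (alice_sys N).
      cnj (pair_contraction d Uf (tilde_contraction d N (u m) (w k)) (N+j) a)
      * pair_contraction d Uf (tilde_contraction d N (u m) (w k)) (N+j) a) / (of_nat d * of_nat d))"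
    using success_term_entries[OF j, of d Mi rho Uf] unfolding C_def a'_def jj_def Al_def b_def t_def by simp
  also have "\<dots> = (1/of_nat d)^(N+1) * (complex_of_real (\<Sum>k<r. \<Sum>m<rr. \<Sum>a\<in>basis d (alice_sys N).
        (cmod (pair_contraction d Uf (tilde_contraction d N (u m) (w k)) (N+j) a))^2) / (of_nat d * of_nat d))"
    by (simp add: sum_cnj_self sum_divide_distrib)
  also have "\<dots> = ?rhs" using d by (simp add: power_add power_one_over field_simps power3_eq_cube)
  finally show ?thesis .
qed

lemma sum_tilde_contraction_cnj_mult:
  fixes M :: "nat \<Rightarrow> qop" and wM :: "nat \<Rightarrow> nat \<Rightarrow> cfg \<Rightarrow> complex" and uu :: "nat \<Rightarrow> cfg \<Rightarrow> complex"
  assumes "povm d (alice_sys N) K M"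
    and Mdec: "\<forall>i\<in>{1..K}. rank_one_sum (basis d (alice_sys N)) (M i) (rM i) (wM i)"
    and Rdec: "rank_one_sum (basis d (AtB_sys N)) rho rr uu"
    and a: "a \<in> basis d (alice_sys N)" and e: "e < d"
  shows "(\<Sum>i\<in>{1..K}. \<Sum>k<rM i. \<Sum>m<rr. cnj (tilde_contraction d N (uu m) (wM i k) a e)
      * tilde_contraction d N (uu m) (wM i k) a e) = (\<Sum>s<d. rho (cfg_AtB N s e) (cfg_AtB N s e))"
proof -
  have Msum: "\<forall>x\<in>basis d (alice_sys N). \<forall>y\<in>basis d (alice_sys N). (\<Sum>i\<in>{1..K}. M i x y) = idop (alice_sys N) x y"
    using assms(1) unfolding povm_def by blast
  define t where "t = 2*N+1"
  have tA: "t \<in> alice_sys N" unfolding t_def alice_sys_eq by auto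
  define X where "X m s s' = cnj (uu m (cfg_AtB N s e)) * uu m (cfg_AtB N s' e)" for m s s'
  define W where "W i k s s' = wM i k (a(t:=s)) * cnj (wM i k (a(t:=s')))" for i k s s'
  have "(\<Sum>i\<in>{1..K}. \<Sum>k<rM i. \<Sum>m<rr. cnj (tilde_contraction d N (uu m) (wM i k) a e) * tilde_contraction d N (uu m) (wM i k) a e)
      = (\<Sum>i\<in>{1..K}. \<Sum>k<rM i. \<Sum>m<rr. \<Sum>s<d. \<Sum>s'<d. X m s s' * W i k s s')"
    unfolding tilde_contraction_def X_def W_def t_def
    by (intro sum.cong refl, simp add: cnj_sum sum_product mult_ac, rule sum.swap)
  also have "\<dots> = (\<Sum>s<d. \<Sum>i\<in>{1..K}. \<Sum>k<rM i. \<Sum>m<rr. \<Sum>s'<d. X m s s' * W i k s s')"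
    by (rule sum_swap_innermost3)
  also have "\<dots> = (\<Sum>s<d. \<Sum>s'<d. \<Sum>i\<in>{1..K}. \<Sum>k<rM i. \<Sum>m<rr. X m s s' * W i k s s')"
    by (rule sum.cong[OF refl], rule sum_swap_innermost3)
  also have "\<dots> = (\<Sum>s<d. \<Sum>s'<d. (\<Sum>m<rr. X m s s') * (\<Sum>i\<in>{1..K}. \<Sum>k<rM i. W i k s s'))"
  proof (rule sum.cong[OF refl], rule sum.cong[OF refl])
    fix s s'
    show "(\<Sum>i\<in>{1..K}. \<Sum>k<rM i. \<Sum>m<rr. X m s s' * W i k s s') = (\<Sum>m<rr. X m s s') * (\<Sum>i\<in>{1..K}. \<Sum>k<rM i. W i k s s')"
      by (simp add: sum_distrib_left sum_distrib_right)
  qed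
  also have "\<dots> = (\<Sum>s<d. \<Sum>s'<d. rho (cfg_AtB N s' e) (cfg_AtB N s e) * (if s = s' then 1 else 0))"
  proof (intro sum.cong refl)
    fix s s' assume s: "s \<in> {..<d}" and s': "s' \<in> {..<d}"
    have tbs: "cfg_AtB N s e \<in> basis d (AtB_sys N)" "cfg_AtB N s' e \<in> basis d (AtB_sys N)"
      using cfg_AtB_in_basis s s' e by auto
    have as: "a(t:=s) \<in> basis d (alice_sys N)" "a(t:=s') \<in> basis d (alice_sys N)" using a s s' tA by (auto intro: fun_upd_in_basis)
    have "(\<Sum>m<rr. X m s s') = rho (cfg_AtB N s' e) (cfg_AtB N s e)"
      unfolding X_def using Rdec tbs unfolding rank_one_sum_def by (simp add: mult.commute)
    moreover have "(\<Sum>i\<in>{1..K}. \<Sum>k<rM i. W i k s s') = (\<Sum>i\<in>{1..K}. M i (a(t:=s)) (a(t:=s')))"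
      unfolding W_def using Mdec as unfolding rank_one_sum_def by (intro sum.cong refl) auto
    moreover have "(\<Sum>i\<in>{1..K}. M i (a(t:=s)) (a(t:=s'))) = idop (alice_sys N) (a(t:=s)) (a(t:=s'))"
      using Msum as by blast
    moreover have "idop (alice_sys N) (a(t:=s)) (a(t:=s')) = (if s = s' then 1 else 0)"
      unfolding idop_def using tA by (auto split: if_splits)
    ultimately show "(\<Sum>m<rr. X m s s') * (\<Sum>i\<in>{1..K}. \<Sum>k<rM i. W i k s s') = rho (cfg_AtB N s' e) (cfg_AtB N s e) * (if s = s' then 1 else 0)"
      by simp
  qed
  also have "\<dots> = (\<Sum>s<d. rho (cfg_AtB N s e) (cfg_AtB N s e))"
    by (simp add: if_distrib cong: if_cong)
  finally show ?thesis .
qed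

lemma sum_tilde_contraction_norm:
  fixes M :: "nat \<Rightarrow> qop" and wM :: "nat \<Rightarrow> nat \<Rightarrow> cfg \<Rightarrow> complex" and uu :: "nat \<Rightarrow> cfg \<Rightarrow> complex"
  assumes "povm d (alice_sys N) K M" and "density d (AtB_sys N) rho"
    and Mdec: "\<forall>i\<in>{1..K}. rank_one_sum (basis d (alice_sys N)) (M i) (rM i) (wM i)"
    and Rdec: "rank_one_sum (basis d (AtB_sys N)) rho rr uu"
  shows "(\<Sum>i\<in>{1..K}. \<Sum>k<rM i. \<Sum>m<rr. \<Sum>a\<in>basis d (alice_sys N). \<Sum>e<d. (cmod (tilde_contraction d N (uu m) (wM i k) a e))^2) = real d ^ (N+1)"
proof -
  have tr: "trace d (AtB_sys N) rho = 1" using assms(2) unfolding density_def by blast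
  define B where "B = basis d (alice_sys N)"
  define z where "z i k m a e = tilde_contraction d N (uu m) (wM i k) a e" for i k m a e
  have "complex_of_real (\<Sum>i\<in>{1..K}. \<Sum>k<rM i. \<Sum>m<rr. \<Sum>a\<in>B. \<Sum>e<d. (cmod (z i k m a e))^2)
      = (\<Sum>i\<in>{1..K}. \<Sum>k<rM i. \<Sum>m<rr. \<Sum>a\<in>B. \<Sum>e<d. cnj (z i k m a e) * z i k m a e)"
    by (simp add: of_real_sum cnj_mult_self)
  also have "\<dots> = (\<Sum>a\<in>B. \<Sum>i\<in>{1..K}. \<Sum>k<rM i. \<Sum>m<rr. \<Sum>e<d. cnj (z i k m a e) * z i k m a e)"
    by (rule sum_swap_innermost3)
  also have "\<dots> = (\<Sum>a\<in>B. \<Sum>e<d. \<Sum>i\<in>{1..K}. \<Sum>k<rM i. \<Sum>m<rr. cnj (z i k m a e) * z i k m a e)"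
    by (rule sum.cong[OF refl], rule sum_swap_innermost3)
  also have "\<dots> = (\<Sum>a\<in>B. \<Sum>e<d. \<Sum>s<d. rho (cfg_AtB N s e) (cfg_AtB N s e))"
    using sum_tilde_contraction_cnj_mult[OF assms(1) Mdec Rdec] unfolding z_def B_def by simp
  also have "\<dots> = of_nat (card B) * (\<Sum>e<d. \<Sum>s<d. rho (cfg_AtB N s e) (cfg_AtB N s e))" by simp
  also have "(\<Sum>e<d. \<Sum>s<d. rho (cfg_AtB N s e) (cfg_AtB N s e)) = trace d (AtB_sys N) rho"
    unfolding trace_AtB by (rule sum.swap)
  also have "card B = d ^ (N+1)" unfolding B_def alice_sys_eq by (simp add: card_basis)
  finally have "complex_of_real (\<Sum>i\<in>{1..K}. \<Sum>k<rM i. \<Sum>m<rr. \<Sum>a\<in>B. \<Sum>e<d. (cmod (z i k m a e))^2) = complex_of_real (real d ^ (N+1))"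
    using tr by simp
  then show ?thesis unfolding z_def B_def by (simp only: of_real_eq_iff)
qed

lemma psd_obtain_rank_one_sum:
  assumes "psd d S X" "finite S"
  obtains r u where "rank_one_sum (basis d S) X r u"
  using psd_rank_one_sum[of "basis d S" X] assms by (auto simp: psd_iff_quad_form)

lemma povm_rank_one_sums:
  assumes "povm d S K M" "finite S"
  obtains r w where "\<forall>i\<in>{1..K}. rank_one_sum (basis d S) (M i) (r i) (w i)"
proof -
  have "\<forall>i\<in>{1..K}. \<exists>r w. rank_one_sum (basis d S) (M i) r w"
    using assms unfolding povm_def by (meson psd_obtain_rank_one_sum)
  then obtain r where "\<forall>i\<in>{1..K}. \<exists>w. rank_one_sum (basis d S) (M i) (r i) w"
    by (auto dest!: bchoice)
  then obtain w where "\<forall>i\<in>{1..K}. rank_one_sum (basis d S) (M i) (r i) (w i)"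
    by (auto dest!: bchoice)
  then show thesis by (rule that)
qed

lemma sum_question_contractions_le:
  assumes d: "d > 0" and N: "N > 0" and V: "\<forall>j\<in>{1..N}. unitary_op d {sysB N} (opB N (V j))"
  shows "(\<Sum>j\<in>{1..N}. \<Sum>a\<in>basis d (alice_sys N). (cmod (pair_contraction d (\<lambda>l. V (l - N)) z (N+j) a))^2)
      \<le> real d * (real N + real d - 1) * (\<Sum>a\<in>basis d (alice_sys N). \<Sum>e<d. (cmod (z a e))^2)"
proof -
  let ?J = "(+) N ` {1..N}"
  have inj: "inj_on ((+) N) {1..N}" by (auto simp: inj_on_def)
  have "(\<Sum>j\<in>{1..N}. \<Sum>a\<in>basis d (alice_sys N). (cmod (pair_contraction d (\<lambda>l. V (l - N)) z (N+j) a))^2)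
      = (\<Sum>l\<in>?J. \<Sum>a\<in>basis d (alice_sys N). (cmod (pair_contraction d (\<lambda>l. V (l - N)) z l a))^2)"
    by (simp only: sum.reindex[OF inj] comp_def)
  also have "\<dots> \<le> real d * (real (card ?J) + real d - 1) * (\<Sum>a\<in>basis d (alice_sys N). \<Sum>e<d. (cmod (z a e))^2)"
  proof (rule sum_pair_contraction_norm_le[OF _ _ d])
    show "finite (alice_sys N)" "?J \<subseteq> alice_sys N" "?J \<noteq> {}"
      using N unfolding alice_sys_eq shift_image by auto
    show "\<forall>l\<in>?J. unitary_mat d (V (l - N))"
      unfolding ball_simps(9) using V unitary_op_opB by auto
  qed
  finally show ?thesis using card_image[OF inj] by simp
qed

lemma P_succ_eq_contraction_norms:
  assumes d: "d > 0"
    and w: "\<forall>i\<in>{1..K}. rank_one_sum (basis d (alice_sys N)) (M i) (rM i) (w i)"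
    and u: "rank_one_sum (basis d (AtB_sys N)) rho r u"
  shows "P_succ d N rho K M U = complex_of_real
      ((\<Sum>i\<in>{1..K}. \<Sum>k<rM i. \<Sum>m<r. \<Sum>j\<in>{1..N}. \<Sum>a\<in>basis d (alice_sys N).
          (cmod (pair_contraction d (\<lambda>l. U i (l - N)) (tilde_contraction d N (u m) (w i k)) (N+j) a))^2)
       / (real N * real d ^ (N+3)))"
proof -
  define Uf where "Uf i l = U i (l - N)" for i l
  let ?Y = "\<lambda>i j k m. \<Sum>a\<in>basis d (alice_sys N).
      (cmod (pair_contraction d (Uf i) (tilde_contraction d N (u m) (w i k)) (N+j) a))^2"
  have "P_succ d N rho K M U
      = 1 / of_nat N * (\<Sum>j\<in>{1..N}. \<Sum>i\<in>{1..K}. complex_of_real ((\<Sum>k<rM i. \<Sum>m<r. ?Y i j k m) / real d ^ (N+3)))"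
    unfolding P_succ_def
  proof (intro arg_cong[where f="\<lambda>x. 1 / of_nat N * x"] sum.cong refl)
    fix j i assume j: "j \<in> {1..N}" and i: "i \<in> {1..K}"
    have "U i j = Uf i (N+j)" unfolding Uf_def by simp
    then show "(let S = {sysA' N j, sysB N};
            sigma = ptrace d (all_sys N) S
                      (mmul d (all_sys N) (op_ext (alice_sys N) (M i) (all_sys N)) (Omega d N rho));
            V = op_ext {sysB N} (opB N (U i j)) S
        in trace d S (mmul d S (psi_plus d (sysA' N j) (sysB N))
                        (mmul d S (mmul d S V sigma) (adj V))))
      = complex_of_real ((\<Sum>k<rM i. \<Sum>m<r. ?Y i j k m) / real d ^ (N+3))"
      using success_term_eq[OF j d w[rule_format, OF i] u] by simp
  qed
  also have "\<dots> = complex_of_real ((\<Sum>j\<in>{1..N}. \<Sum>i\<in>{1..K}. \<Sum>k<rM i. \<Sum>m<r. ?Y i j k m)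
      / (real N * real d ^ (N+3)))"
    by (simp add: sum_divide_distrib mult_ac)
  also have "(\<Sum>j\<in>{1..N}. \<Sum>i\<in>{1..K}. \<Sum>k<rM i. \<Sum>m<r. ?Y i j k m)
      = (\<Sum>i\<in>{1..K}. \<Sum>k<rM i. \<Sum>m<r. \<Sum>j\<in>{1..N}. ?Y i j k m)"
    by (rule sum_swap_innermost3[symmetric])
  finally show ?thesis unfolding Uf_def .
qed

theorem proposition3:
  fixes d N K :: nat and rho :: qop and M :: "nat \<Rightarrow> qop"
    and U :: "nat \<Rightarrow> nat \<Rightarrow> nat \<Rightarrow> nat \<Rightarrow> complex"
  assumes "d \<ge> 2" and "N \<ge> 2" and "K \<ge> 1"
    and "density d (AtB_sys N) rho"
    and "povm d (alice_sys N) K M"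
    and "\<forall>i\<in>{1..K}. \<forall>j\<in>{1..N}. unitary_op d {sysB N} (opB N (U i j))"
  shows "P_succ d N rho K M U \<le> complex_of_real ((real N + real d - 1) / (real d * real N))"
proof -
  have d: "d > 0" and N: "N > 0" using assms(1,2) by auto
  have fin: "finite (alice_sys N)" "finite (AtB_sys N)" unfolding alice_sys_eq AtB_sys_eq by auto
  obtain rM w where w: "\<forall>i\<in>{1..K}. rank_one_sum (basis d (alice_sys N)) (M i) (rM i) (w i)"
    using povm_rank_one_sums[OF assms(5) fin(1)] .
  obtain r u where u: "rank_one_sum (basis d (AtB_sys N)) rho r u"
    using psd_obtain_rank_one_sum[OF _ fin(2)] assms(4) unfolding density_def by blast
  let ?Z = "\<lambda>i k m. \<Sum>a\<in>basis d (alice_sys N). \<Sum>e<d. (cmod (tilde_contraction d N (u m) (w i k) a e))^2"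
  have "(\<Sum>i\<in>{1..K}. \<Sum>k<rM i. \<Sum>m<r. \<Sum>j\<in>{1..N}. \<Sum>a\<in>basis d (alice_sys N).
          (cmod (pair_contraction d (\<lambda>l. U i (l - N)) (tilde_contraction d N (u m) (w i k)) (N+j) a))^2)
      \<le> (\<Sum>i\<in>{1..K}. \<Sum>k<rM i. \<Sum>m<r. real d * (real N + real d - 1) * ?Z i k m)"
    using assms(6) by (intro sum_mono sum_question_contractions_le[OF d N]) auto
  also have "\<dots> = real d * (real N + real d - 1) * (\<Sum>i\<in>{1..K}. \<Sum>k<rM i. \<Sum>m<r. ?Z i k m)"
    by (simp only: sum_distrib_left)
  also have "\<dots> = real d * (real N + real d - 1) * real d ^ (N+1)"
    by (simp only: sum_tilde_contraction_norm[OF assms(5,4) w u])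
  finally have "Re (P_succ d N rho K M U) \<le> (real d * (real N + real d - 1) * real d ^ (N+1)) / (real N * real d ^ (N+3))"
    unfolding P_succ_eq_contraction_norms[OF d w u] by (simp add: divide_right_mono)
  also have "\<dots> = (real N + real d - 1) / (real d * real N)"
    using d N by (simp add: power_add field_simps power3_eq_cube)
  finally show ?thesis unfolding P_succ_eq_contraction_norms[OF d w u] by (simp add: less_eq_complex_def)
qed

end
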